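(* Let $X$ be a finite connected simple $(q+1)$-regular graph ($q\ge1$), let $\alpha=\frac{(q+1)+\sqrt{(q+1)^2+4(q+1)}}{2}$, and fix $x_0\in VX$. Let $Z_X(u,x_0)=\exp\big(\sum_{m=1}^\infty\frac{N_m(x_0)}{m}u^m\big)$, where $N_m(x_0)$ is the number of closed geodesic paths of length $m$ starting at $x_0$. Then for $|u|<1/\alpha$, $$Z_X(u,x_0)=(1-u^2)^{-\frac{q-1}{2}}\prod_{\lambda\in\sigma_{x_0}(\Delta_X)}\big(1-(q+1-\lambda)u+qu^2\big)^{-m_{x_0}(\lambda)}\times\exp\Big(\sum_{m=3}^\infty\frac{R_m(x_0)}{m}u^m\Big).$$
   Context: A graph $X=(VX,EX)$ has maps $e\mapsto(o(e),t(e))$, $e\mapsto\bar e$ with $\bar e\ne e$, $\bar{\bar e}=e$, $o(e)=t(\bar e)$; simple means no loops and no multiple edges; $(q+1)$-regular means $\deg(x)=|\{e:o(e)=x\}|=q+1$ for all $x$. A path $c=(e_1,\dots,e_n)$ ($t(e_i)=o(e_{i+1})$) is closed if $o(e_1)=t(e_n)$, has a back-tracking if $e_{i+1}=\bar e_i$ for some $i$, has a tail if $e_n=\bar e_1$; a geodesic loop is a closed path without back-tracking, a closed geodesic path is a geodesic loop without tail; it starts at $o(e_1)$. $\Delta_X=D_X-A_X$ with $(A_Xf)(x)=\sum_{o(e)=x}f(t(e))$, $(D_Xf)(x)=\deg(x)f(x)$. For an eigenvalue $\lambda$ of $\Delta_X$, the $x_0$-local multiplicity $m_{x_0}(\lambda)$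 is the $(x_0,x_0)$-entry of the orthogonal projection (primitive idempotent) onto the $\lambda$-eigenspace; the $x_0$-local spectrum $\sigma_{x_0}(\Delta_X)$ is the set of eigenvalues $\lambda$ with $m_{x_0}(\lambda)>0$. With $c_k(x)$ the number of geodesic loops of length $k$ starting at $x$ and $(\Delta_Xc_k)(x)=\deg(x)c_k(x)-\sum_{o(e)=x}c_k(t(e))$, set $R_m(x_0)=\sum_{j=1}^{\lceil m/2\rceil-1}j(\Delta_Xc_{m-2j})(x_0)$. Non-integer powers $(1-w)^s$ mean $\exp(s\log(1-w))$ with $\log(1-w)=-\sum_{n\ge1}w^n/n$. *)

theory Defs
  imports Complex_Main
begin

text \<open>The directed edges e with o(e)=x, t(e)=y are the pairs (x,y) with adj x y,
  and the reversal of (x,y) is (y,x).  A path (e_1,...,e_n) is encoded by its vertex list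
  [v_0,...,v_n] with e_i = (v_(i-1), v_i).\<close>

definition simple_graph :: "('a \<Rightarrow> 'a \<Rightarrow> bool) \<Rightarrow> bool" where
  "simple_graph adj \<longleftrightarrow> (\<forall>x y. adj x y \<longrightarrow> adj y x) \<and> (\<forall>x. \<not> adj x x)"

definition connected_graph :: "('a \<Rightarrow> 'a \<Rightarrow> bool) \<Rightarrow> bool" where
  "connected_graph adj \<longleftrightarrow> (\<forall>x y. adj\<^sup>*\<^sup>* x y)"

definition deg :: "('a \<Rightarrow> 'a \<Rightarrow> bool) \<Rightarrow> 'a \<Rightarrow> nat" where
  "deg adj x = card {y. adj x y}"

definition regular_graph :: "('a \<Rightarrow> 'a \<Rightarrow> bool) \<Rightarrow> nat \<Rightarrow> bool" where
  "regular_graph adj d \<longleftrightarrow> (\<forall>x. deg adj x = d)"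

text \<open>Path of length n = length vs - 1 \<ge> 1 (each consecutive pair is an edge).\<close>
definition is_path :: "('a \<Rightarrow> 'a \<Rightarrow> bool) \<Rightarrow> 'a list \<Rightarrow> bool" where
  "is_path adj vs \<longleftrightarrow> 2 \<le> length vs \<and> (\<forall>i. Suc i < length vs \<longrightarrow> adj (vs ! i) (vs ! Suc i))"

definition is_closed :: "'a list \<Rightarrow> bool" where
  "is_closed vs \<longleftrightarrow> hd vs = last vs"

text \<open>back-tracking: e_(i+1) = reverse of e_i\<close>
definition has_backtracking :: "'a list \<Rightarrow> bool" where
  "has_backtracking vs \<longleftrightarrow>
     (\<exists>i. i + 2 < length vs \<and> (vs ! Suc i, vs ! (i + 2)) = (vs ! Suc i, vs ! i))"

text \<open>tail: e_n = reverse of e_1\<close>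
definition has_tail :: "'a list \<Rightarrow> bool" where
  "has_tail vs \<longleftrightarrow>
     (let n = length vs - 1 in (vs ! (n - 1), vs ! n) = (vs ! 1, vs ! 0))"

definition geodesic_loops :: "('a \<Rightarrow> 'a \<Rightarrow> bool) \<Rightarrow> nat \<Rightarrow> 'a \<Rightarrow> 'a list set" where
  "geodesic_loops adj k x =
     {vs. is_path adj vs \<and> length vs = Suc k \<and> hd vs = x \<and> is_closed vs \<and> \<not> has_backtracking vs}"

definition closed_geodesics :: "('a \<Rightarrow> 'a \<Rightarrow> bool) \<Rightarrow> nat \<Rightarrow> 'a \<Rightarrow> 'a list set" where
  "closed_geodesics adj k x = {vs \<in> geodesic_loops adj k x. \<not> has_tail vs}"

definition c_count :: "('a \<Rightarrow> 'a \<Rightarrow> bool) \<Rightarrow> nat \<Rightarrow> 'a \<Rightarrow> nat" where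
  "c_count adj k x = card (geodesic_loops adj k x)"

definition N_count :: "('a \<Rightarrow> 'a \<Rightarrow> bool) \<Rightarrow> nat \<Rightarrow> 'a \<Rightarrow> nat" where
  "N_count adj m x = card (closed_geodesics adj m x)"

definition laplacian :: "('a \<Rightarrow> 'a \<Rightarrow> bool) \<Rightarrow> ('a \<Rightarrow> 'b::comm_ring_1) \<Rightarrow> 'a \<Rightarrow> 'b" where
  "laplacian adj f x = of_nat (deg adj x) * f x - (\<Sum>y\<in>{y. adj x y}. f y)"

definition eigenspace :: "('a::finite \<Rightarrow> 'a \<Rightarrow> bool) \<Rightarrow> real \<Rightarrow> ('a \<Rightarrow> real) set" where
  "eigenspace adj lam = {f. \<forall>x. laplacian adj f x = lam * f x}"

definition is_eigenvalue :: "('a::finite \<Rightarrow> 'a \<Rightarrow> bool) \<Rightarrow> real \<Rightarrow> bool" where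
  "is_eigenvalue adj lam \<longleftrightarrow> (\<exists>f \<in> eigenspace adj lam. f \<noteq> (\<lambda>_. 0))"

definition ip :: "('a::finite \<Rightarrow> real) \<Rightarrow> ('a \<Rightarrow> real) \<Rightarrow> real" where
  "ip f g = (\<Sum>x\<in>UNIV. f x * g x)"

definition eig_proj :: "('a::finite \<Rightarrow> 'a \<Rightarrow> bool) \<Rightarrow> real \<Rightarrow> ('a \<Rightarrow> real) \<Rightarrow> ('a \<Rightarrow> real)" where
  "eig_proj adj lam v =
     (THE g. g \<in> eigenspace adj lam \<and> (\<forall>h \<in> eigenspace adj lam. ip (\<lambda>x. v x - g x) h = 0))"

text \<open>(x0,x0)-entry of the projection: (P delta_x0)(x0).\<close>
definition local_mult :: "('a::finite \<Rightarrow> 'a \<Rightarrow> bool) \<Rightarrow> 'a \<Rightarrow> real \<Rightarrow> real" where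
  "local_mult adj x0 lam = eig_proj adj lam (\<lambda>x. if x = x0 then 1 else 0) x0"

definition local_spectrum :: "('a::finite \<Rightarrow> 'a \<Rightarrow> bool) \<Rightarrow> 'a \<Rightarrow> real set" where
  "local_spectrum adj x0 = {lam. is_eigenvalue adj lam \<and> local_mult adj x0 lam > 0}"

definition R_term :: "('a::finite \<Rightarrow> 'a \<Rightarrow> bool) \<Rightarrow> nat \<Rightarrow> 'a \<Rightarrow> int" where
  "R_term adj m x0 =
     (\<Sum>j = 1..(m + 1) div 2 - 1.
        int j * laplacian adj (\<lambda>x. int (c_count adj (m - 2 * j) x)) x0)"

definition log1m :: "complex \<Rightarrow> complex" where
  "log1m w = - (\<Sum>n. w ^ Suc n / of_nat (Suc n))"

definition pow1m :: "complex \<Rightarrow> complex \<Rightarrow> complex" where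
  "pow1m w s = exp (s * log1m w)"

definition zeta_local :: "('a::finite \<Rightarrow> 'a \<Rightarrow> bool) \<Rightarrow> complex \<Rightarrow> 'a \<Rightarrow> complex" where
  "zeta_local adj u x0 =
     exp (\<Sum>m. of_nat (N_count adj (Suc m) x0) / of_nat (Suc m) * u ^ Suc m)"

end

theory Submission
  imports Defs "HOL-Analysis.Analysis"
begin

text \<open>Splitting closed non-backtracking walks according to their first and last steps
  expresses the number \<open>N_m\<close> of closed geodesics at \<open>x\<close> through the numbers \<open>c_k\<close> of
  geodesic loops: \<open>N_m = c_m - (q - 1) \<Sum>\<^sub>j c_{m-2j} + R_m\<close>.  The non-backtracking walks
  ending at \<open>x0\<close> satisfy the three-term recursion of the adjacency operator \<open>A\<close>, which
  identifies \<open>c_m(x0) - (q - 1) \<Sum>\<^sub>j c_{m-2j}(x0)\<close>, up to a parity term \<open>q - 1\<close>, with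
  \<open>D_m(A, q)\<close> applied to the indicator of \<open>x0\<close> and evaluated at \<open>x0\<close>; here \<open>D_m\<close> are the
  Dickson polynomials, \<open>D_m(r1 + r2, r1 r2) = r1^m + r2^m\<close>.  Expanding the indicator in
  eigenvectors of the Laplacian turns this into \<open>\<Sum>\<^sub>\<lambda> m_x0(\<lambda>) (r1^m + r2^m)\<close>, where
  \<open>1 - (q + 1 - \<lambda>) u + q u^2 = (1 - r1 u) (1 - r2 u)\<close>, and summing
  \<open>\<Sum>\<^sub>m (r u)^m / m = - log (1 - r u)\<close> termwise gives the three factors.  The radius \<open>1 / \<alpha>\<close>
  is what keeps every \<open>|r u|\<close> below \<open>1\<close>.\<close>

lemma nat_one_two_or_ge3_cases:
  assumes "1 \<le> (m::nat)"
  obtains "m = 1" | "m = 2" | n where "m = Suc (Suc (Suc n))"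
proof -
  have "m = 1 \<or> m = 2 \<or> 3 \<le> m" using assms by arith
  moreover have "3 \<le> m \<Longrightarrow> m = Suc (Suc (Suc (m - 3)))" by arith
  ultimately show ?thesis using that by blast
qed

lemma sum_sum_delete:
  fixes g :: "'b \<Rightarrow> 'c::comm_ring_1"
  assumes "finite B"
  shows "(\<Sum>z\<in>B. \<Sum>w\<in>B - {z}. g w) = (of_nat (card B) - 1) * (\<Sum>w\<in>B. g w)"
proof -
  have "(\<Sum>z\<in>B. \<Sum>w\<in>B - {z}. g w) = (\<Sum>z\<in>B. (\<Sum>w\<in>B. g w) - g z)"
    using assms by (simp add: sum_diff1)
  then show ?thesis by (simp add: sum_subtractf algebra_simps)
qed

lemma sum_sum_sum_delete:
  fixes F :: "'b \<Rightarrow> 'b \<Rightarrow> 'c::comm_ring_1"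
  assumes "finite B"
  shows "(\<Sum>z\<in>B. \<Sum>a\<in>B - {z}. \<Sum>b\<in>B - {z}. F a b)
     = (of_nat (card B) - 2) * (\<Sum>a\<in>B. \<Sum>b\<in>B. F a b) + (\<Sum>a\<in>B. F a a)"
proof -
  let ?S = "\<Sum>a\<in>B. \<Sum>b\<in>B. F a b"
  have "(\<Sum>a\<in>B - {z}. \<Sum>b\<in>B - {z}. F a b) = ?S - (\<Sum>b\<in>B. F z b) - (\<Sum>a\<in>B. F a z) + F z z"
    if "z \<in> B" for z
    using assms that by (simp add: sum_diff1 sum_subtractf)
  then have "(\<Sum>z\<in>B. \<Sum>a\<in>B - {z}. \<Sum>b\<in>B - {z}. F a b)
      = of_nat (card B) * ?S - ?S - (\<Sum>z\<in>B. \<Sum>a\<in>B. F a z) + (\<Sum>z\<in>B. F z z)"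
    by (simp add: sum.distrib sum_subtractf)
  also have "(\<Sum>z\<in>B. \<Sum>a\<in>B. F a z) = ?S" by (rule sum.swap)
  finally show ?thesis by (simp add: algebra_simps)
qed

text \<open>\<open>sum_same_parity_below h m\<close> is the sum of \<open>h k\<close> over \<open>0 < k < m\<close> with \<open>k \<equiv> m (mod 2)\<close>,
  indexed by \<open>k = m - 2 j\<close> as in \<open>R_term\<close>.\<close>

definition sum_same_parity_below :: "(nat \<Rightarrow> 'b::comm_monoid_add) \<Rightarrow> nat \<Rightarrow> 'b" where
  "sum_same_parity_below h m = (\<Sum>j = 1..(m + 1) div 2 - 1. h (m - 2 * j))"

lemma sum_atLeastAtMost_Suc_shift:
  "(\<Sum>j = 1..Suc K. f j) = f (1::nat) + (\<Sum>j = 1..K. f (Suc j))"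
proof -
  have "(\<Sum>j = 1..Suc K. f j) = f 1 + (\<Sum>j = Suc 1..Suc K. f j)"
    by (rule sum.atLeast_Suc_atMost) simp
  also have "(\<Sum>j = Suc 1..Suc K. f j) = (\<Sum>j = 1..K. f (Suc j))"
    by (rule sum.shift_bounds_cl_Suc_ivl)
  finally show ?thesis .
qed

lemma same_parity_bound_add2: "1 \<le> m \<Longrightarrow> (m + 2 + 1) div 2 - 1 = Suc ((m + 1) div 2 - 1)"
  by simp

lemma sum_same_parity_below_add2:
  "1 \<le> m \<Longrightarrow> sum_same_parity_below h (m + 2) = h m + sum_same_parity_below h m"
  unfolding sum_same_parity_below_def
  by (simp only: same_parity_bound_add2 sum_atLeastAtMost_Suc_shift) simp

lemma sum_weighted_same_parity_add2:
  fixes h :: "nat \<Rightarrow> 'b::comm_ring_1"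
  assumes "1 \<le> m"
  shows "(\<Sum>j = 1..(m + 2 + 1) div 2 - 1. of_nat j * h (m + 2 - 2 * j))
     = h m + (\<Sum>j = 1..(m + 1) div 2 - 1. of_nat j * h (m - 2 * j)) + sum_same_parity_below h m"
  unfolding sum_same_parity_below_def same_parity_bound_add2[OF assms] sum_atLeastAtMost_Suc_shift
  by (simp add: algebra_simps sum.distrib)

fun dickson :: "'b::comm_ring_1 \<Rightarrow> nat \<Rightarrow> 'b \<Rightarrow> 'b" where
  "dickson c 0 a = 2"
| "dickson c (Suc 0) a = a"
| "dickson c (Suc (Suc k)) a = a * dickson c (Suc k) a - c * dickson c k a"

lemma dickson_eq_power_sum:
  assumes "r1 + r2 = a" "r1 * r2 = c"
  shows "dickson c m a = r1 ^ m + r2 ^ m"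
proof (induction m rule: less_induct)
  case (less m)
  consider "m = 0" | "m = 1" | k where "m = Suc (Suc k)"
    by (metis One_nat_def not0_implies_Suc)
  then show ?case
  proof cases
    case 3
    have "r1 ^ m + r2 ^ m = (r1 + r2) * (r1 ^ Suc k + r2 ^ Suc k) - (r1 * r2) * (r1 ^ k + r2 ^ k)"
      unfolding 3 by (simp add: algebra_simps)
    then show ?thesis using less.IH[of k] less.IH[of "Suc k"] by (simp add: 3 assms)
  qed (use assms in simp_all)
qed

lemma of_real_dickson: "of_real (dickson c m a) = dickson (of_real c) m (of_real a)"
  by (induction c m a rule: dickson.induct) simp_all

lemma of_int_indicator: "of_int (indicator A x) = indicator A x"
  by (simp add: indicator_def)

section \<open>Adjacency operator and non-backtracking walks\<close>

definition adjacency :: "('a \<Rightarrow> 'a \<Rightarrow> bool) \<Rightarrow> ('a \<Rightarrow> 'b::comm_ring_1) \<Rightarrow> 'a \<Rightarrow> 'b" where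
  "adjacency adj f x = (\<Sum>y\<in>{y. adj x y}. f y)"

lemma adjacency_diff: "adjacency adj (\<lambda>y. f y - g y) x = adjacency adj f x - adjacency adj g x"
  unfolding adjacency_def by (simp add: sum_subtractf)

lemma adjacency_add: "adjacency adj (\<lambda>y. f y + g y) x = adjacency adj f x + adjacency adj g x"
  unfolding adjacency_def by (simp add: sum.distrib)

lemma adjacency_scale: "adjacency adj (\<lambda>y. c * f y) x = c * adjacency adj f x"
  unfolding adjacency_def by (simp add: sum_distrib_left)

lemma adjacency_sum: "adjacency adj (\<lambda>y. \<Sum>i\<in>I. f i y) x = (\<Sum>i\<in>I. adjacency adj (f i) x)"
  unfolding adjacency_def by (rule sum.swap)

lemma adjacency_of_int: "adjacency adj (\<lambda>y. of_int (f y)) x = of_int (adjacency adj f x)"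
  unfolding adjacency_def by simp

lemma laplacian_eq_adjacency: "laplacian adj f x = of_nat (deg adj x) * f x - adjacency adj f x"
  unfolding laplacian_def adjacency_def ..

lemma laplacian_add: "laplacian adj (\<lambda>y. f y + g y) x = laplacian adj f x + laplacian adj g x"
  unfolding laplacian_eq_adjacency adjacency_add by (simp add: algebra_simps)

lemma laplacian_scale: "laplacian adj (\<lambda>y. c * f y) x = c * laplacian adj f x"
  unfolding laplacian_eq_adjacency adjacency_scale by (simp add: algebra_simps)

definition is_walk :: "('a \<Rightarrow> 'a \<Rightarrow> bool) \<Rightarrow> 'a list \<Rightarrow> bool" where
  "is_walk adj vs \<longleftrightarrow> (\<forall>i. Suc i < length vs \<longrightarrow> adj (vs ! i) (vs ! Suc i))"

definition non_backtracking :: "'a list \<Rightarrow> bool" where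
  "non_backtracking vs \<longleftrightarrow> (\<forall>i. i + 2 < length vs \<longrightarrow> vs ! (i + 2) \<noteq> vs ! i)"

lemma is_walk_Nil [simp]: "is_walk adj []"
  unfolding is_walk_def by simp

lemma non_backtracking_Nil [simp]: "non_backtracking []"
  unfolding non_backtracking_def by simp

lemma is_walk_Cons:
  "is_walk adj (x # ws) \<longleftrightarrow> (ws \<noteq> [] \<longrightarrow> adj x (hd ws)) \<and> is_walk adj ws"
  unfolding is_walk_def by (cases ws) (auto simp: nth_Cons' less_Suc_eq_0_disj)

lemma non_backtracking_Cons:
  "non_backtracking (x # ws) \<longleftrightarrow> (Suc 0 < length ws \<longrightarrow> ws ! 1 \<noteq> x) \<and> non_backtracking ws"
  unfolding non_backtracking_def
proof (intro iffI conjI allI impI)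
  fix i assume H: "\<forall>i. i + 2 < length (x # ws) \<longrightarrow> (x # ws) ! (i + 2) \<noteq> (x # ws) ! i"
  show "ws ! 1 \<noteq> x" if "Suc 0 < length ws" using H[rule_format, of 0] that by simp
  show "ws ! (i + 2) \<noteq> ws ! i" if "i + 2 < length ws" using H[rule_format, of "Suc i"] that by simp
next
  fix i assume "(Suc 0 < length ws \<longrightarrow> ws ! 1 \<noteq> x) \<and> (\<forall>i. i + 2 < length ws \<longrightarrow> ws ! (i + 2) \<noteq> ws ! i)"
    and "i + 2 < length (x # ws)"
  then show "(x # ws) ! (i + 2) \<noteq> (x # ws) ! i" by (cases i) auto
qed

text \<open>\<open>nbw_walks adj k p x y s\<close> consists of the non-backtracking walks of length \<open>k\<close> from \<open>x\<close>
  to \<open>y\<close> that stay non-backtracking when a virtual vertex \<open>p\<close> is put in front and a virtual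
  vertex \<open>s\<close> at the end; \<open>nbw_count\<close> counts them by recursion on the first step.\<close>

definition nbw_walks :: "('a \<Rightarrow> 'a \<Rightarrow> bool) \<Rightarrow> nat \<Rightarrow> 'a \<Rightarrow> 'a \<Rightarrow> 'a \<Rightarrow> 'a \<Rightarrow> 'a list set" where
  "nbw_walks adj k p x y s = {vs. length vs = Suc k \<and> hd vs = x \<and> last vs = y \<and> is_walk adj vs
     \<and> non_backtracking vs \<and> vs ! 1 \<noteq> p \<and> vs ! (k - 1) \<noteq> s}"

fun nbw_count :: "('a \<Rightarrow> 'a \<Rightarrow> bool) \<Rightarrow> nat \<Rightarrow> 'a \<Rightarrow> 'a \<Rightarrow> 'a \<Rightarrow> 'a \<Rightarrow> nat" where
  "nbw_count adj 0 p x y s = 0"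
| "nbw_count adj (Suc 0) p x y s = (if adj x y \<and> y \<noteq> p \<and> x \<noteq> s then 1 else 0)"
| "nbw_count adj (Suc (Suc k)) p x y s = (\<Sum>z\<in>{z. adj x z \<and> z \<noteq> p}. nbw_count adj (Suc k) x z y s)"

lemma finite_nbw_walks: "finite (nbw_walks (adj :: 'a::finite \<Rightarrow> 'a \<Rightarrow> bool) k p x y s)"
proof (rule finite_subset)
  show "nbw_walks adj k p x y s \<subseteq> {vs. set vs \<subseteq> UNIV \<and> length vs = Suc k}"
    unfolding nbw_walks_def by auto
qed (rule finite_lists_length_eq[OF finite_class.finite_UNIV])

lemma nbw_walks_Suc_0:
  "nbw_walks adj (Suc 0) p x y s = (if adj x y \<and> y \<noteq> p \<and> x \<noteq> s then {[x, y]} else {})"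
proof -
  have "vs \<in> nbw_walks adj (Suc 0) p x y s \<longleftrightarrow> vs = [x, y] \<and> adj x y \<and> y \<noteq> p \<and> x \<noteq> s" for vs
  proof
    assume H: "vs \<in> nbw_walks adj (Suc 0) p x y s"
    then obtain a b where "vs = [a, b]" by (auto simp: nbw_walks_def length_Suc_conv)
    with H show "vs = [x, y] \<and> adj x y \<and> y \<noteq> p \<and> x \<noteq> s"
      by (auto simp: nbw_walks_def is_walk_Cons)
  qed (auto simp: nbw_walks_def is_walk_def non_backtracking_def)
  then show ?thesis by auto
qed

lemma Cons_mem_nbw_walks_Suc_Suc:
  "v # ws \<in> nbw_walks adj (Suc (Suc n)) p x y s \<longleftrightarrow>
     v = x \<and> adj x (hd ws) \<and> hd ws \<noteq> p \<and> ws \<in> nbw_walks adj (Suc n) x (hd ws) y s"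
proof (cases "length ws = Suc (Suc n)")
  case True
  then obtain w ws' where ws: "ws = w # ws'" by (cases ws) auto
  with True have "ws' \<noteq> []" by auto
  with ws show ?thesis by (auto simp: nbw_walks_def is_walk_Cons non_backtracking_Cons hd_conv_nth)
qed (simp add: nbw_walks_def)

lemma nbw_walks_Suc_Suc:
  "nbw_walks adj (Suc (Suc n)) p x y s =
     (\<Union>z\<in>{z. adj x z \<and> z \<noteq> p}. (#) x ` nbw_walks adj (Suc n) x z y s)"
proof (intro set_eqI iffI)
  fix vs assume vs: "vs \<in> nbw_walks adj (Suc (Suc n)) p x y s"
  then obtain v ws where vws: "vs = v # ws" unfolding nbw_walks_def by (cases vs) auto
  with vs have "v = x" "adj x (hd ws)" "hd ws \<noteq> p" "ws \<in> nbw_walks adj (Suc n) x (hd ws) y s"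
    by (simp_all add: Cons_mem_nbw_walks_Suc_Suc)
  with vws show "vs \<in> (\<Union>z\<in>{z. adj x z \<and> z \<noteq> p}. (#) x ` nbw_walks adj (Suc n) x z y s)"
    by blast
next
  fix vs assume "vs \<in> (\<Union>z\<in>{z. adj x z \<and> z \<noteq> p}. (#) x ` nbw_walks adj (Suc n) x z y s)"
  then obtain z ws where "adj x z" "z \<noteq> p" "ws \<in> nbw_walks adj (Suc n) x z y s" "vs = x # ws"
    by blast
  moreover from \<open>ws \<in> _\<close> have "hd ws = z" unfolding nbw_walks_def by simp
  ultimately show "vs \<in> nbw_walks adj (Suc (Suc n)) p x y s"
    by (simp add: Cons_mem_nbw_walks_Suc_Suc)
qed

lemma nbw_walks_disjoint:
  "x \<noteq> x' \<Longrightarrow> (#) v ` nbw_walks adj k p x y s \<inter> (#) v ` nbw_walks adj k p' x' y' s' = {}"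
  unfolding nbw_walks_def by auto

lemma card_nbw_walks:
  "card (nbw_walks (adj :: 'a::finite \<Rightarrow> 'a \<Rightarrow> bool) (Suc n) p x y s) = nbw_count adj (Suc n) p x y s"
proof (induction n arbitrary: p x y s)
  case 0
  show ?case by (simp add: nbw_walks_Suc_0)
next
  case (Suc n)
  have "card (nbw_walks adj (Suc (Suc n)) p x y s) =
        (\<Sum>z\<in>{z. adj x z \<and> z \<noteq> p}. card ((#) x ` nbw_walks adj (Suc n) x z y s))"
    unfolding nbw_walks_Suc_Suc
  proof (rule card_UN_disjoint)
    show "\<forall>z\<in>{z. adj x z \<and> z \<noteq> p}. finite ((#) x ` nbw_walks adj (Suc n) x z y s)"
      by (simp add: finite_nbw_walks)
    show "\<forall>z\<in>{z. adj x z \<and> z \<noteq> p}. \<forall>z'\<in>{z. adj x z \<and> z \<noteq> p}. z \<noteq> z' \<longrightarrow>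
      (#) x ` nbw_walks adj (Suc n) x z y s \<inter> (#) x ` nbw_walks adj (Suc n) x z' y s = {}"
      by (intro ballI impI nbw_walks_disjoint)
  qed simp
  also have "\<dots> = nbw_count adj (Suc (Suc n)) p x y s"
    by (simp add: card_image Suc.IH)
  finally show ?case .
qed

lemma is_walk_nth_Suc_neq:
  assumes "is_walk adj vs" "\<And>x. \<not> adj x x" "Suc i < length vs"
  shows "vs ! Suc i \<noteq> vs ! i"
  using assms unfolding is_walk_def by metis

lemma is_path_iff: "is_path adj vs \<longleftrightarrow> 2 \<le> length vs \<and> is_walk adj vs"
  unfolding is_path_def is_walk_def ..

lemma has_backtracking_iff: "has_backtracking vs \<longleftrightarrow> \<not> non_backtracking vs"
  unfolding has_backtracking_def non_backtracking_def by auto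

section \<open>Counting closed geodesics\<close>

locale finite_simple_graph =
  fixes adj :: "'a::finite \<Rightarrow> 'a \<Rightarrow> bool"
  assumes simple: "simple_graph adj"
begin

lemma adj_sym: "adj x y \<Longrightarrow> adj y x"
  using simple unfolding simple_graph_def by blast

lemma adj_irrefl: "\<not> adj x x"
  using simple unfolding simple_graph_def by blast

lemma neighbours_not_self: "{z. adj x z \<and> z \<noteq> x} = {z. adj x z}"
  using adj_irrefl by auto

lemma neighbours_remove: "{z. adj x z} - {w} = {z. adj x z \<and> z \<noteq> w}"
  by auto

lemma nbw_walks_penultimate_neq:
  assumes "vs \<in> nbw_walks adj (Suc n) p x y s"
  shows "vs ! n \<noteq> y"
proof -
  from assms have "length vs = Suc (Suc n)" "last vs = y" "is_walk adj vs"
    unfolding nbw_walks_def by simp_all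
  moreover have "last vs = vs ! Suc n"
    using \<open>length vs = Suc (Suc n)\<close> by (subst last_conv_nth) auto
  ultimately show ?thesis using is_walk_nth_Suc_neq[of adj vs n] adj_irrefl by simp
qed

lemma nbw_walks_eq_filter_last:
  "nbw_walks adj (Suc n) p x y s = {vs \<in> nbw_walks adj (Suc n) p x y y. vs ! n \<noteq> s}"
proof (intro set_eqI iffI)
  fix vs assume vs: "vs \<in> nbw_walks adj (Suc n) p x y s"
  then have "vs ! n \<noteq> y" by (rule nbw_walks_penultimate_neq)
  with vs show "vs \<in> {vs \<in> nbw_walks adj (Suc n) p x y y. vs ! n \<noteq> s}"
    by (simp add: nbw_walks_def)
qed (simp add: nbw_walks_def)

lemma geodesic_loops_eq_nbw_walks: "geodesic_loops adj (Suc n) x = nbw_walks adj (Suc n) x x x x"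
proof (intro set_eqI iffI)
  fix vs assume vs: "vs \<in> geodesic_loops adj (Suc n) x"
  then have len: "length vs = Suc (Suc n)" and walk: "is_walk adj vs"
    and hd: "hd vs = x" and last: "last vs = x"
    unfolding geodesic_loops_def is_path_iff is_closed_def by auto
  then have "vs \<noteq> []" by auto
  with len hd last have "vs ! 0 = x" "vs ! Suc n = x"
    by (simp_all add: hd_conv_nth last_conv_nth)
  moreover have "vs ! 1 \<noteq> vs ! 0" "vs ! Suc n \<noteq> vs ! n"
    using is_walk_nth_Suc_neq[OF walk adj_irrefl] len by auto
  ultimately have "vs ! 1 \<noteq> x" "vs ! n \<noteq> x" by auto
  with vs show "vs \<in> nbw_walks adj (Suc n) x x x x"
    unfolding geodesic_loops_def nbw_walks_def is_path_iff is_closed_def has_backtracking_iff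
    by auto
qed (auto simp: geodesic_loops_def nbw_walks_def is_path_iff is_closed_def has_backtracking_iff)

lemma c_count_0: "c_count adj 0 x = 0"
proof -
  have "geodesic_loops adj 0 x = {}"
    unfolding geodesic_loops_def is_path_def by auto
  then show ?thesis unfolding c_count_def by simp
qed

lemma c_count_Suc: "c_count adj (Suc n) x = nbw_count adj (Suc n) x x x x"
  unfolding c_count_def geodesic_loops_eq_nbw_walks by (rule card_nbw_walks)

lemma has_tail_Cons:
  assumes "ws \<in> nbw_walks adj (Suc n) p z x s"
  shows "has_tail (x # ws) \<longleftrightarrow> ws ! n = z"
proof -
  from assms have len: "length ws = Suc (Suc n)" and "hd ws = z" "last ws = x"
    unfolding nbw_walks_def by simp_all
  moreover from len have "ws \<noteq> []" by auto
  ultimately have "ws ! 0 = z" "ws ! Suc n = x"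
    by (simp_all add: hd_conv_nth last_conv_nth)
  with len show ?thesis unfolding has_tail_def Let_def by auto
qed

lemma closed_geodesics_Suc_Suc:
  "closed_geodesics adj (Suc (Suc n)) x = (\<Union>z\<in>{z. adj x z}. (#) x ` nbw_walks adj (Suc n) x z x z)"
proof -
  have "closed_geodesics adj (Suc (Suc n)) x
      = (\<Union>z\<in>{z. adj x z}. (#) x ` {ws \<in> nbw_walks adj (Suc n) x z x x. ws ! n \<noteq> z})"
    unfolding closed_geodesics_def geodesic_loops_eq_nbw_walks nbw_walks_Suc_Suc neighbours_not_self
    by (auto simp: has_tail_Cons)
  then show ?thesis
    by (simp only: nbw_walks_eq_filter_last[symmetric])
qed

lemma N_count_Suc_Suc:
  "N_count adj (Suc (Suc n)) x = (\<Sum>z\<in>{z. adj x z}. nbw_count adj (Suc n) x z x z)"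
proof -
  have "N_count adj (Suc (Suc n)) x = (\<Sum>z\<in>{z. adj x z}. card ((#) x ` nbw_walks adj (Suc n) x z x z))"
    unfolding N_count_def closed_geodesics_Suc_Suc
  proof (rule card_UN_disjoint)
    show "\<forall>z\<in>{z. adj x z}. finite ((#) x ` nbw_walks adj (Suc n) x z x z)"
      by (simp add: finite_nbw_walks)
    show "\<forall>z\<in>{z. adj x z}. \<forall>z'\<in>{z. adj x z}. z \<noteq> z' \<longrightarrow>
      (#) x ` nbw_walks adj (Suc n) x z x z \<inter> (#) x ` nbw_walks adj (Suc n) x z' x z' = {}"
      by (intro ballI impI nbw_walks_disjoint)
  qed simp
  then show ?thesis by (simp add: card_image card_nbw_walks)
qed

lemma N_count_Suc_0: "N_count adj (Suc 0) x = 0"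
proof -
  have "geodesic_loops adj (Suc 0) x = {}"
    unfolding geodesic_loops_eq_nbw_walks nbw_walks_Suc_0 using adj_irrefl by simp
  then show ?thesis unfolding N_count_def closed_geodesics_def by simp
qed

lemma nbw_count_snoc:
  "nbw_count adj (Suc (Suc k)) p x y s = (\<Sum>w\<in>{w. adj y w \<and> w \<noteq> s}. nbw_count adj (Suc k) p x w y)"
proof (induction k arbitrary: p x y s)
  case 0
  have "nbw_count adj (Suc (Suc 0)) p x y s = card {z. adj x z \<and> z \<noteq> p \<and> adj z y \<and> y \<noteq> x \<and> z \<noteq> s}"
    by (simp add: sum.If_cases Int_def)
  also have "{z. adj x z \<and> z \<noteq> p \<and> adj z y \<and> y \<noteq> x \<and> z \<noteq> s} = {w. adj y w \<and> w \<noteq> s \<and> adj x w \<and> w \<noteq> p \<and> x \<noteq> y}"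
    using adj_sym by blast
  also have "card \<dots> = (\<Sum>w\<in>{w. adj y w \<and> w \<noteq> s}. nbw_count adj (Suc 0) p x w y)"
    by (simp add: sum.If_cases Int_def)
  finally show ?case .
next
  case (Suc k)
  have "nbw_count adj (Suc (Suc (Suc k))) p x y s
      = (\<Sum>z\<in>{z. adj x z \<and> z \<noteq> p}. \<Sum>w\<in>{w. adj y w \<and> w \<noteq> s}. nbw_count adj (Suc k) x z w y)"
    using Suc.IH by simp
  also have "\<dots> = (\<Sum>w\<in>{w. adj y w \<and> w \<noteq> s}. \<Sum>z\<in>{z. adj x z \<and> z \<noteq> p}. nbw_count adj (Suc k) x z w y)"
    by (rule sum.swap)
  also have "\<dots> = (\<Sum>w\<in>{w. adj y w \<and> w \<noteq> s}. nbw_count adj (Suc (Suc k)) p x w y)"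
    by simp
  finally show ?case .
qed

lemma nbw_count_rev: "nbw_count adj (Suc k) p x y s = nbw_count adj (Suc k) s y x p"
proof (induction k arbitrary: p x y s)
  case 0
  show ?case using adj_sym by auto
next
  case (Suc k)
  have "nbw_count adj (Suc (Suc k)) p x y s = (\<Sum>z\<in>{z. adj x z \<and> z \<noteq> p}. nbw_count adj (Suc k) s y z x)"
    using Suc.IH by simp
  also have "\<dots> = nbw_count adj (Suc (Suc k)) s y x p"
    by (simp only: nbw_count_snoc)
  finally show ?case .
qed

lemma nbw_count_split_first:
  assumes "adj x w"
  shows "nbw_count adj (Suc (Suc k)) x x y s = nbw_count adj (Suc k) x w y s + nbw_count adj (Suc (Suc k)) w x y s"
proof -
  have "nbw_count adj (Suc (Suc k)) x x y s = (\<Sum>z\<in>{z. adj x z}. nbw_count adj (Suc k) x z y s)"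
    by (simp add: neighbours_not_self)
  also have "\<dots> = nbw_count adj (Suc k) x w y s + (\<Sum>z\<in>{z. adj x z} - {w}. nbw_count adj (Suc k) x z y s)"
    by (rule sum.remove) (simp_all add: assms)
  also have "(\<Sum>z\<in>{z. adj x z} - {w}. nbw_count adj (Suc k) x z y s) = nbw_count adj (Suc (Suc k)) w x y s"
    by (simp add: neighbours_remove)
  finally show ?thesis .
qed

lemma nbw_count_split_last:
  assumes "adj w y"
  shows "nbw_count adj (Suc (Suc k)) p x y y = nbw_count adj (Suc k) p x w y + nbw_count adj (Suc (Suc k)) p x y w"
proof -
  have "nbw_count adj (Suc (Suc k)) p x y y = (\<Sum>v\<in>{v. adj y v}. nbw_count adj (Suc k) p x v y)"
    by (simp only: nbw_count_snoc neighbours_not_self)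
  also have "\<dots> = nbw_count adj (Suc k) p x w y + (\<Sum>v\<in>{v. adj y v} - {w}. nbw_count adj (Suc k) p x v y)"
    by (rule sum.remove) (simp_all add: assms adj_sym)
  also have "(\<Sum>v\<in>{v. adj y v} - {w}. nbw_count adj (Suc k) p x v y) = nbw_count adj (Suc (Suc k)) p x y w"
    by (simp only: nbw_count_snoc neighbours_remove)
  finally show ?thesis .
qed

lemma c_count_le_2: "m \<le> 2 \<Longrightarrow> c_count adj m x = 0"
  using adj_irrefl by (auto simp: le_Suc_eq numeral_2_eq_2 c_count_0 c_count_Suc neighbours_not_self)

text \<open>The number of geodesic loops of length \<open>m\<close> at \<open>x\<close> with a tail \<open>x z \<dots> z x\<close>.\<close>

definition tail_count :: "nat \<Rightarrow> 'a \<Rightarrow> int" where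
  "tail_count m x = (\<Sum>z\<in>{z. adj x z}. int (nbw_count adj (m - 2) x z z x))"

lemma tail_count_le_4:
  assumes "m \<le> 4"
  shows "tail_count m x = 0"
proof -
  have "nbw_count adj (m - 2) x z z x = 0" for z
  proof -
    consider "m - 2 = 0" | "m - 2 = Suc 0" | "m - 2 = Suc (Suc 0)" using assms by arith
    then show ?thesis using adj_irrefl by cases simp_all
  qed
  then show ?thesis unfolding tail_count_def by simp
qed

lemma c_count_eq_N_count_add_tail_count:
  assumes "1 \<le> m"
  shows "int (c_count adj m x) = int (N_count adj m x) + tail_count m x"
  using assms
proof (cases rule: nat_one_two_or_ge3_cases)
  case 1
  then show ?thesis by (simp add: c_count_le_2 N_count_Suc_0 tail_count_le_4)
next
  case 2
  then show ?thesis using adj_irrefl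
    by (simp add: numeral_2_eq_2 c_count_le_2 N_count_Suc_Suc tail_count_le_4)
next
  case (3 n)
  have "c_count adj m x = (\<Sum>z\<in>{z. adj x z}. nbw_count adj (Suc (Suc n)) x z x x)"
    by (simp add: 3 c_count_Suc neighbours_not_self)
  also have "\<dots> = (\<Sum>z\<in>{z. adj x z}. nbw_count adj (Suc n) x z z x + nbw_count adj (Suc (Suc n)) x z x z)"
    using adj_sym by (intro sum.cong refl nbw_count_split_last) simp
  finally show ?thesis
    by (simp add: 3 sum.distrib N_count_Suc_Suc tail_count_def)
qed

lemma R_term_le_4: "m \<le> 4 \<Longrightarrow> R_term adj m x = 0"
proof -
  assume m: "m \<le> 4"
  have "laplacian adj (\<lambda>y. int (c_count adj (m - 2 * j) y)) x = 0" if "1 \<le> j" for j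
    using m that by (simp add: laplacian_def c_count_le_2)
  then show ?thesis unfolding R_term_def by simp
qed

lemma R_term_add2:
  "1 \<le> m \<Longrightarrow> R_term adj (m + 2) x = laplacian adj (\<lambda>y. int (c_count adj m y)) x + R_term adj m x
     + sum_same_parity_below (\<lambda>k. laplacian adj (\<lambda>y. int (c_count adj k y)) x) m"
  unfolding R_term_def by (rule sum_weighted_same_parity_add2)

end

locale regular_simple_graph = finite_simple_graph +
  fixes q :: nat
  assumes regular: "regular_graph adj (q + 1)"
begin

lemma card_neighbours: "card {y. adj x y} = q + 1"
  using regular unfolding regular_graph_def deg_def by blast

lemma sum_neighbours_c_count:
  "(\<Sum>z\<in>{z. adj x z}. int (c_count adj k z))
     = (int q + 1) * int (c_count adj k x) - laplacian adj (\<lambda>y. int (c_count adj k y)) x"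
  by (simp add: laplacian_def deg_def card_neighbours)

lemma sum_nbw_count_avoiding_neighbour:
  assumes "1 \<le> j"
  shows "(\<Sum>z\<in>{z. adj x z}. int (nbw_count adj j z x x z)) = (int q - 1) * int (c_count adj j x) + tail_count j x"
  using assms
proof (cases rule: nat_one_two_or_ge3_cases)
  case 1
  then show ?thesis using adj_irrefl by (simp add: c_count_le_2 tail_count_le_4)
next
  case 2
  then show ?thesis by (simp add: numeral_2_eq_2 c_count_le_2 tail_count_le_4)
next
  case (3 n)
  let ?B = "{z. adj x z}"
  let ?F = "\<lambda>a b. int (nbw_count adj (Suc n) x a b x)"
  have "nbw_count adj j z x x z = (\<Sum>a\<in>{a. adj x a \<and> a \<noteq> z}. nbw_count adj (Suc (Suc n)) x a x z)" for z
    unfolding 3 by (rule nbw_count.simps(3))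
  also have "\<dots> z = (\<Sum>a\<in>{a. adj x a \<and> a \<noteq> z}. \<Sum>b\<in>{b. adj x b \<and> b \<noteq> z}. nbw_count adj (Suc n) x a b x)" for z
    by (simp only: nbw_count_snoc)
  finally have "int (nbw_count adj j z x x z) = (\<Sum>a\<in>?B - {z}. \<Sum>b\<in>?B - {z}. ?F a b)" for z
    by (simp add: neighbours_remove)
  then have "(\<Sum>z\<in>?B. int (nbw_count adj j z x x z))
      = (int (card ?B) - 2) * (\<Sum>a\<in>?B. \<Sum>b\<in>?B. ?F a b) + (\<Sum>a\<in>?B. ?F a a)"
    using sum_sum_sum_delete[of ?B ?F] by simp
  also have "(\<Sum>a\<in>?B. \<Sum>b\<in>?B. ?F a b) = int (c_count adj j x)"
  proof -
    have "c_count adj j x = (\<Sum>a\<in>?B. nbw_count adj (Suc (Suc n)) x a x x)"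
      unfolding 3 c_count_Suc nbw_count.simps(3)[of adj "Suc n" x x x x] neighbours_not_self ..
    also have "\<dots> = (\<Sum>a\<in>?B. \<Sum>b\<in>?B. nbw_count adj (Suc n) x a b x)"
      by (simp only: nbw_count_snoc neighbours_not_self)
    finally show ?thesis by simp
  qed
  also have "(\<Sum>a\<in>?B. ?F a a) = tail_count j x"
    by (simp add: 3 tail_count_def)
  finally show ?thesis by (simp add: card_neighbours)
qed

lemma nbw_count_tail_neighbour:
  assumes "adj x z"
  shows "int (nbw_count adj (Suc (Suc (Suc k))) x z z x)
    = int (c_count adj (Suc (Suc (Suc k))) z) - 2 * int (nbw_count adj (Suc (Suc k)) x z x z)
      - int (nbw_count adj (Suc k) z x x z)"
proof -
  have zx: "adj z x" using assms by (rule adj_sym)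
  have "c_count adj (Suc (Suc (Suc k))) z = nbw_count adj (Suc (Suc k)) z x z z + nbw_count adj (Suc (Suc (Suc k))) x z z z"
    unfolding c_count_Suc using zx by (rule nbw_count_split_first)
  moreover have "nbw_count adj (Suc (Suc (Suc k))) x z z z = nbw_count adj (Suc (Suc k)) x z x z + nbw_count adj (Suc (Suc (Suc k))) x z z x"
    using assms by (rule nbw_count_split_last)
  moreover have "nbw_count adj (Suc (Suc k)) z x z z = nbw_count adj (Suc k) z x x z + nbw_count adj (Suc (Suc k)) x z x z"
    using nbw_count_split_last[OF assms, of k z x] nbw_count_rev[of "Suc k" z x z x] by simp
  ultimately show ?thesis by simp
qed

lemma tail_count_rec:
  assumes "1 \<le> m"
  shows "tail_count (m + 2 + 2) x = (int q - 1) * (int (c_count adj (m + 2) x) - int (c_count adj m x))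
    - laplacian adj (\<lambda>y. int (c_count adj (m + 2) y)) x + 2 * tail_count (m + 2) x - tail_count m x"
proof -
  obtain k where m: "m = Suc k" using assms by (cases m) auto
  let ?B = "{z. adj x z}"
  have "tail_count (m + 2 + 2) x = (\<Sum>z\<in>?B. int (nbw_count adj (Suc (Suc (Suc k))) x z z x))"
  proof -
    have "m + 2 + 2 - 2 = Suc (Suc (Suc k))" using m by simp
    then show ?thesis unfolding tail_count_def by (simp only:)
  qed
  also have "\<dots> = (\<Sum>z\<in>?B. int (c_count adj (m + 2) z))
      - 2 * (\<Sum>z\<in>?B. int (nbw_count adj (Suc (Suc k)) x z x z)) - (\<Sum>z\<in>?B. int (nbw_count adj (Suc k) z x x z))"
    by (simp add: m nbw_count_tail_neighbour sum_subtractf sum_distrib_left del: nbw_count.simps)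
  also have "(\<Sum>z\<in>?B. int (nbw_count adj (Suc (Suc k)) x z x z)) = int (c_count adj (m + 2) x) - tail_count (m + 2) x"
    using c_count_eq_N_count_add_tail_count[of "m + 2" x] by (simp add: m N_count_Suc_Suc)
  also have "(\<Sum>z\<in>?B. int (nbw_count adj (Suc k) z x x z)) = (int q - 1) * int (c_count adj m x) + tail_count m x"
    using sum_nbw_count_avoiding_neighbour[of "Suc k" x] by (simp add: m)
  finally show ?thesis by (simp add: sum_neighbours_c_count algebra_simps)
qed

lemma sum_same_parity_below_c_count_le_4:
  assumes "m \<le> 4"
  shows "sum_same_parity_below (\<lambda>k. int (c_count adj k x)) m = 0"
proof -
  have "c_count adj (m - 2 * j) x = 0" if "1 \<le> j" for j
    using assms that by (simp add: c_count_le_2)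
  then show ?thesis unfolding sum_same_parity_below_def by simp
qed

lemma tail_count_eq:
  "tail_count m x = (int q - 1) * sum_same_parity_below (\<lambda>k. int (c_count adj k x)) m - R_term adj m x"
proof (induction m rule: less_induct)
  case (less m)
  show ?case
  proof (cases "m \<le> 4")
    case True
    then show ?thesis by (simp only: tail_count_le_4 R_term_le_4 sum_same_parity_below_c_count_le_4)
  next
    case False
    define n where "n = m - 4"
    with False have m: "m = n + 2 + 2" and n: "1 \<le> n" by simp_all
    have n2: "1 \<le> n + 2" by simp
    have IH: "tail_count (n + 2) x = (int q - 1) * sum_same_parity_below (\<lambda>k. int (c_count adj k x)) (n + 2) - R_term adj (n + 2) x"
      "tail_count n x = (int q - 1) * sum_same_parity_below (\<lambda>k. int (c_count adj k x)) n - R_term adj n x"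
      using less.IH m by simp_all
    show ?thesis
      unfolding m tail_count_rec[OF n] IH sum_same_parity_below_add2[OF n2] sum_same_parity_below_add2[OF n]
        R_term_add2[OF n2] R_term_add2[OF n]
      by (simp add: algebra_simps)
  qed
qed

lemma N_count_eq_c_count:
  "1 \<le> m \<Longrightarrow> int (N_count adj m x)
     = int (c_count adj m x) - (int q - 1) * sum_same_parity_below (\<lambda>k. int (c_count adj k x)) m + R_term adj m x"
  using c_count_eq_N_count_add_tail_count[of m x] tail_count_eq[of m x] by simp

text \<open>With virtual neighbours \<open>p = y\<close> and \<open>s = x0\<close> there is no extra constraint, so \<open>nbw_to x0 k y\<close>
  counts all non-backtracking walks of length \<open>k\<close> from \<open>y\<close> to \<open>x0\<close>.\<close>

definition nbw_to :: "'a \<Rightarrow> nat \<Rightarrow> 'a \<Rightarrow> int" where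
  "nbw_to x0 k y = (if k = 0 then indicator {x0} y else int (nbw_count adj k y y x0 x0))"

lemma nbw_to_at: "1 \<le> k \<Longrightarrow> nbw_to x0 k x0 = int (c_count adj k x0)"
  by (cases k) (simp_all add: nbw_to_def c_count_Suc)

lemma sum_nbw_count_from_neighbour:
  assumes "1 \<le> k"
  shows "(\<Sum>z\<in>{z. adj y z}. int (nbw_count adj k z y x0 x0)) = int q * nbw_to x0 k y"
proof (cases "k = 1")
  case True
  then have "(\<Sum>z\<in>{z. adj y z}. int (nbw_count adj k z y x0 x0))
      = (\<Sum>z\<in>{z. adj y z} - {x0}. of_bool (adj y x0))"
    using adj_irrefl by (intro sum.mono_neutral_cong_right) auto
  also have "\<dots> = int q * nbw_to x0 k y"
    using True adj_irrefl by (auto simp: nbw_to_def card_neighbours)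
  finally show ?thesis .
next
  case False
  with assms obtain k' where k: "k = Suc (Suc k')" by (metis One_nat_def Suc_le_D not0_implies_Suc)
  have "(\<Sum>z\<in>{z. adj y z}. int (nbw_count adj k z y x0 x0))
      = (\<Sum>z\<in>{z. adj y z}. \<Sum>w\<in>{w. adj y w} - {z}. int (nbw_count adj (Suc k') y w x0 x0))"
    by (simp add: k neighbours_remove del: nbw_count.simps(2))
  also have "\<dots> = int q * (\<Sum>w\<in>{w. adj y w}. int (nbw_count adj (Suc k') y w x0 x0))"
    by (simp add: sum_sum_delete card_neighbours)
  also have "(\<Sum>w\<in>{w. adj y w}. int (nbw_count adj (Suc k') y w x0 x0)) = nbw_to x0 k y"
    by (simp add: k nbw_to_def neighbours_not_self del: nbw_count.simps(2))
  finally show ?thesis .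
qed

lemma adjacency_nbw_to_0: "adjacency adj (nbw_to x0 0) y = nbw_to x0 1 y"
  using adj_irrefl by (auto simp: adjacency_def nbw_to_def indicator_def of_bool_def sum.delta')

lemma adjacency_nbw_to_1: "adjacency adj (nbw_to x0 1) y = nbw_to x0 2 y + (int q + 1) * nbw_to x0 0 y"
proof (cases "y = x0")
  case True
  have "adjacency adj (nbw_to x0 1) y = (\<Sum>z\<in>{z. adj y z}. 1)"
    unfolding adjacency_def nbw_to_def True using adj_irrefl adj_sym by (intro sum.cong refl) auto
  then show ?thesis using True by (simp add: card_neighbours nbw_to_def numeral_2_eq_2)
next
  case False
  have "adjacency adj (nbw_to x0 1) y = (\<Sum>z\<in>{z. adj y z}. int (nbw_count adj 1 y z x0 x0))"
    unfolding adjacency_def nbw_to_def using False adj_irrefl by (intro sum.cong refl) auto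
  then show ?thesis using False by (simp add: nbw_to_def numeral_2_eq_2 neighbours_not_self)
qed

lemma adjacency_nbw_to:
  assumes "2 \<le> m"
  shows "adjacency adj (nbw_to x0 m) y = nbw_to x0 (Suc m) y + int q * nbw_to x0 (m - 1) y"
proof -
  obtain k where m: "m = Suc (Suc k)" using assms by (metis add_2_eq_Suc le_Suc_ex)
  have "adjacency adj (nbw_to x0 m) y
      = (\<Sum>z\<in>{z. adj y z}. int (nbw_count adj (Suc k) z y x0 x0) + int (nbw_count adj m y z x0 x0))"
    unfolding adjacency_def nbw_to_def m using adj_sym
    by (intro sum.cong refl) (simp add: nbw_count_split_first[of _ y k x0 x0] del: nbw_count.simps)
  also have "\<dots> = int q * nbw_to x0 (m - 1) y + nbw_to x0 (Suc m) y"
    by (simp add: sum.distrib sum_nbw_count_from_neighbour m nbw_to_def neighbours_not_self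
        del: nbw_count.simps(2))
  finally show ?thesis by simp
qed

fun nbw_to_below :: "'a \<Rightarrow> nat \<Rightarrow> 'a \<Rightarrow> int" where
  "nbw_to_below x0 0 y = 0"
| "nbw_to_below x0 (Suc 0) y = 0"
| "nbw_to_below x0 (Suc (Suc k)) y = nbw_to x0 k y + nbw_to_below x0 k y"

lemma adjacency_nbw_to_below:
  "1 \<le> m \<Longrightarrow> adjacency adj (nbw_to_below x0 (Suc m)) y = (int q + 1) * nbw_to_below x0 m y + nbw_to x0 m y"
proof (induction m arbitrary: y rule: less_induct)
  case (less m)
  from less.prems show ?case
  proof (cases rule: nat_one_two_or_ge3_cases)
    case 1
    then show ?thesis by (simp add: numeral_2_eq_2 adjacency_nbw_to_0[unfolded One_nat_def])
  next
    case 2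
    then show ?thesis
      by (simp add: numeral_3_eq_3 numeral_2_eq_2 adjacency_nbw_to_1[unfolded One_nat_def numeral_2_eq_2])
  next
    case (3 n)
    have "nbw_to_below x0 (Suc m) = (\<lambda>y. nbw_to x0 (Suc (Suc n)) y + nbw_to_below x0 (Suc (Suc n)) y)"
      by (simp add: 3 fun_eq_iff)
    then have "adjacency adj (nbw_to_below x0 (Suc m)) y
        = adjacency adj (nbw_to x0 (Suc (Suc n))) y + adjacency adj (nbw_to_below x0 (Suc (Suc n))) y"
      by (simp only: adjacency_add)
    also have "\<dots> = nbw_to x0 (Suc (Suc (Suc n))) y + int q * nbw_to x0 (Suc n) y
        + (int q + 1) * nbw_to_below x0 (Suc n) y + nbw_to x0 (Suc n) y"
      using adjacency_nbw_to[of "Suc (Suc n)" x0 y] less.IH[of "Suc n" y] 3 by (simp del: nbw_to_below.simps)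
    finally show ?thesis
      by (simp add: 3 algebra_simps nbw_to_below.simps(3)[of x0 "Suc n"] del: nbw_to_below.simps)
  qed
qed

fun dickson_adj :: "'a \<Rightarrow> nat \<Rightarrow> 'a \<Rightarrow> int" where
  "dickson_adj x0 0 y = 2 * indicator {x0} y"
| "dickson_adj x0 (Suc 0) y = adjacency adj (indicator {x0}) y"
| "dickson_adj x0 (Suc (Suc k)) y = adjacency adj (dickson_adj x0 (Suc k)) y - int q * dickson_adj x0 k y"

lemma nbw_to_0: "nbw_to x0 0 = indicator {x0}"
  by (simp add: fun_eq_iff nbw_to_def)

lemma dickson_adj_eq_nbw_to:
  "1 \<le> m \<Longrightarrow> dickson_adj x0 m y = nbw_to x0 m y - (int q - 1) * nbw_to_below x0 m y"
proof (induction m arbitrary: y rule: less_induct)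
  case (less m)
  from less.prems show ?case
  proof (cases rule: nat_one_two_or_ge3_cases)
    case 1
    then show ?thesis using adjacency_nbw_to_0[of x0 y] by (simp add: nbw_to_0)
  next
    case 2
    have "dickson_adj x0 (Suc 0) = nbw_to x0 1"
      using adjacency_nbw_to_0[of x0] by (simp add: fun_eq_iff nbw_to_0)
    then show ?thesis
      using 2 adjacency_nbw_to_1[of x0 y] by (simp add: numeral_2_eq_2 nbw_to_0 algebra_simps)
  next
    case (3 n)
    have D1: "dickson_adj x0 (Suc (Suc n)) = (\<lambda>y. nbw_to x0 (Suc (Suc n)) y - (int q - 1) * nbw_to_below x0 (Suc (Suc n)) y)"
      using less.IH[of "Suc (Suc n)"] 3 by (simp add: fun_eq_iff)
    have D0: "dickson_adj x0 (Suc n) y = nbw_to x0 (Suc n) y - (int q - 1) * nbw_to_below x0 (Suc n) y"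
      using less.IH[of "Suc n"] 3 by simp
    have "dickson_adj x0 m y = adjacency adj (nbw_to x0 (Suc (Suc n))) y
        - (int q - 1) * adjacency adj (nbw_to_below x0 (Suc (Suc n))) y - int q * dickson_adj x0 (Suc n) y"
      unfolding 3 dickson_adj.simps(3)[of x0 "Suc n"] D1 adjacency_diff adjacency_scale ..
    also have "\<dots> = nbw_to x0 m y - (int q - 1) * nbw_to_below x0 m y"
      using adjacency_nbw_to[of "Suc (Suc n)" x0 y] adjacency_nbw_to_below[of "Suc n" x0 y]
      by (simp add: 3 D0 algebra_simps)
    finally show ?thesis .
  qed
qed

lemma nbw_to_below_at:
  "1 \<le> m \<Longrightarrow> nbw_to_below x0 m x0 = sum_same_parity_below (\<lambda>k. int (c_count adj k x0)) m + of_bool (even m)"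
proof (induction m rule: less_induct)
  case (less m)
  from less.prems show ?case
  proof (cases rule: nat_one_two_or_ge3_cases)
    case 1
    then show ?thesis by (simp add: sum_same_parity_below_def)
  next
    case 2
    then show ?thesis by (simp add: sum_same_parity_below_def numeral_2_eq_2 nbw_to_0 c_count_0)
  next
    case (3 n)
    have "sum_same_parity_below (\<lambda>k. int (c_count adj k x0)) (Suc n + 2)
        = int (c_count adj (Suc n) x0) + sum_same_parity_below (\<lambda>k. int (c_count adj k x0)) (Suc n)"
      by (rule sum_same_parity_below_add2) simp
    then show ?thesis using less.IH[of "Suc n"] nbw_to_at[of "Suc n" x0] 3 by simp
  qed
qed

theorem N_count_eq_dickson_adj:
  assumes "1 \<le> m"
  shows "int (N_count adj m x0) = dickson_adj x0 m x0 + (if even m then int q - 1 else 0) + R_term adj m x0"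
  using N_count_eq_c_count[OF assms, of x0] dickson_adj_eq_nbw_to[OF assms, of x0 x0]
    nbw_to_at[OF assms, of x0] nbw_to_below_at[OF assms, of x0]
  by (cases "even m") (simp_all add: algebra_simps)

lemma nbw_count_Suc_le: "nbw_count adj (Suc k) p x y s \<le> (q + 1) ^ Suc k"
proof (induction k arbitrary: p x y s)
  case 0
  then show ?case by simp
next
  case (Suc k)
  have "nbw_count adj (Suc (Suc k)) p x y s \<le> (\<Sum>z\<in>{z. adj x z \<and> z \<noteq> p}. (q + 1) ^ Suc k)"
    unfolding nbw_count.simps(3) by (rule sum_mono) (rule Suc.IH)
  also have "\<dots> = card {z. adj x z \<and> z \<noteq> p} * (q + 1) ^ Suc k"
    by simp
  also have "\<dots> \<le> card {z. adj x z} * (q + 1) ^ Suc k"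
    by (intro mult_right_mono card_mono) auto
  finally show ?case by (simp add: card_neighbours)
qed

lemma N_count_le: "N_count adj m x \<le> (q + 1) ^ m"
proof -
  have "finite (geodesic_loops adj m x)"
  proof (rule finite_subset)
    show "geodesic_loops adj m x \<subseteq> {vs. set vs \<subseteq> UNIV \<and> length vs = Suc m}"
      unfolding geodesic_loops_def by auto
  qed (rule finite_lists_length_eq[OF finite_class.finite_UNIV])
  then have "N_count adj m x \<le> c_count adj m x"
    unfolding N_count_def c_count_def closed_geodesics_def by (rule card_mono) auto
  also have "\<dots> \<le> (q + 1) ^ m"
    by (cases m) (simp add: c_count_0, metis c_count_Suc nbw_count_Suc_le)
  finally show ?thesis .
qed

end

section \<open>Spectral decomposition at a vertex\<close>

lemma quadratic_nonneg_imp_linear_coeff_zero: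
  fixes c d :: real
  assumes "0 \<le> d" and nonneg: "\<And>t. 0 \<le> 2 * t * c + t\<^sup>2 * d"
  shows "c = 0"
proof (rule ccontr)
  assume c: "c \<noteq> 0"
  define t where "t = - c / (d + 1)"
  have td: "t * (d + 1) = - c" unfolding t_def using \<open>0 \<le> d\<close> by simp
  have "(d + 1)\<^sup>2 * (2 * t * c + t\<^sup>2 * d) = 2 * c * (t * (d + 1)) * (d + 1) + (t * (d + 1))\<^sup>2 * d"
    by (simp add: algebra_simps power2_eq_square)
  also have "\<dots> = - (c\<^sup>2 * (d + 2))" unfolding td by (simp add: algebra_simps power2_eq_square)
  also have "\<dots> < 0" using c \<open>0 \<le> d\<close> by simp
  finally have "2 * t * c + t\<^sup>2 * d < 0"
    using \<open>0 \<le> d\<close> by (simp add: mult_less_0_iff)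
  with nonneg[of t] show False by simp
qed

text \<open>Perturbing the maximiser \<open>v\<close> along any \<open>y \<in> W\<close> shows \<open>M v - f v \<bottom> W\<close>, where \<open>M\<close> is
  the maximal Rayleigh quotient.\<close>

lemma self_adjoint_Rayleigh_max_eigenvector:
  fixes f :: "'v::real_inner \<Rightarrow> 'v"
  assumes lin: "linear f" and sym: "\<And>x y. inner (f x) y = inner x (f y)"
    and W: "subspace W" and inv: "\<And>w. w \<in> W \<Longrightarrow> f w \<in> W"
    and v: "v \<in> W" "inner v v = 1"
    and max: "\<And>y. y \<in> W \<Longrightarrow> inner (f y) y \<le> inner (f v) v * inner y y"
  shows "f v = inner (f v) v *\<^sub>R v"
proof -
  define M where "M = inner (f v) v"
  define b where "b = M *\<^sub>R v - f v"
  have orth: "inner b y = 0" if y: "y \<in> W" for y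
  proof (rule quadratic_nonneg_imp_linear_coeff_zero)
    show "0 \<le> M * inner y y - inner (f y) y" using max[OF y] unfolding M_def by simp
    fix t :: real
    have "v + t *\<^sub>R y \<in> W" using W v y by (simp add: subspace_add subspace_scale)
    from max[OF this] have "inner (f v + t *\<^sub>R f y) (v + t *\<^sub>R y) \<le> M * inner (v + t *\<^sub>R y) (v + t *\<^sub>R y)"
      unfolding M_def by (simp add: linear_add[OF lin] linear_cmul[OF lin])
    moreover have "inner (f y) v = inner (f v) y" using sym by (metis inner_commute)
    ultimately show "0 \<le> 2 * t * inner b y + t\<^sup>2 * (M * inner y y - inner (f y) y)"
      using v(2) unfolding b_def M_def
      by (simp add: inner_add_left inner_add_right inner_diff_left inner_commute power2_eq_square algebra_simps)
  qed
  have "b \<in> W" unfolding b_def using W v inv by (simp add: subspace_diff subspace_scale)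
  then have "b = 0" using orth[of b] by simp
  then show ?thesis unfolding b_def M_def by simp
qed

lemma self_adjoint_invariant_subspace_has_eigenvector:
  fixes f :: "'v::euclidean_space \<Rightarrow> 'v"
  assumes lin: "linear f" and sym: "\<And>x y. inner (f x) y = inner x (f y)"
    and W: "subspace W" and inv: "\<And>w. w \<in> W \<Longrightarrow> f w \<in> W"
    and w: "w \<in> W" "w \<noteq> 0"
  obtains v c where "v \<in> W" "v \<noteq> 0" "f v = c *\<^sub>R v"
proof -
  let ?S = "W \<inter> sphere 0 1"
  have "compact ?S" using W by (intro closed_Int_compact closed_subspace compact_sphere)
  moreover have "w /\<^sub>R norm w \<in> ?S" using W w by (simp add: subspace_scale)
  then have "?S \<noteq> {}" by blast
  moreover have "continuous_on ?S (\<lambda>x. inner (f x) x)"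
    using lin by (intro continuous_on_inner continuous_on_id linear_continuous_on)
      (simp add: linear_conv_bounded_linear)
  ultimately have "\<exists>v\<in>?S. \<forall>y\<in>?S. inner (f y) y \<le> inner (f v) v"
    by (rule continuous_attains_sup)
  then obtain v where v: "v \<in> ?S" and vmax: "\<And>y. y \<in> ?S \<Longrightarrow> inner (f y) y \<le> inner (f v) v"
    by blast
  have "inner v v = 1" using v by (simp add: dot_square_norm)
  have "inner (f y) y \<le> inner (f v) v * inner y y" if "y \<in> W" for y
  proof (cases "y = 0")
    case True
    then show ?thesis by (simp add: linear_0[OF lin])
  next
    case False
    have "y /\<^sub>R norm y \<in> ?S" using W that False by (simp add: subspace_scale)
    from vmax[OF this] have "inverse (norm y) * (inverse (norm y) * inner (f y) y) \<le> inner (f v) v"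
      by (simp add: linear_cmul[OF lin])
    moreover have "0 < norm y" using False by simp
    ultimately have "inner (f y) y \<le> inner (f v) v * (norm y * norm y)"
      by (simp add: field_simps)
    then show ?thesis by (simp add: power2_norm_eq_inner[symmetric] power2_eq_square)
  qed
  with self_adjoint_Rayleigh_max_eigenvector[OF lin sym W inv] v \<open>inner v v = 1\<close>
  have "f v = inner (f v) v *\<^sub>R v" by blast
  moreover have "v \<noteq> 0" using v by auto
  ultimately show ?thesis using v that by blast
qed

lemma ip_eq_inner: "ip f g = inner (vec_lambda f :: real^'a) (vec_lambda g)"
  unfolding ip_def inner_vec_def by simp

lemma vec_lambda_diff: "(vec_lambda (\<lambda>x. f x - g x) :: 'b::ab_group_add^'a) = vec_lambda f - vec_lambda g"
  by (simp add: vec_eq_iff)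

lemma inner_eq_ip: "inner x y = ip (vec_nth x) (vec_nth (y :: real^'a))"
  unfolding ip_def inner_vec_def by simp

lemma ip_diff_left: "ip (\<lambda>x. f x - g x) h = ip f h - ip g h"
  unfolding ip_def by (simp add: algebra_simps sum_subtractf)

lemma ip_sum_left: "ip (\<lambda>x. \<Sum>i\<in>I. f i x) h = (\<Sum>i\<in>I. ip (f i) h)"
  unfolding ip_def by (simp add: sum_distrib_right sum.swap[of _ I])

lemma ip_self_eq_0_iff: "ip f f = 0 \<longleftrightarrow> f = (\<lambda>_. 0)"
  unfolding ip_def by (simp add: sum_nonneg_eq_0_iff fun_eq_iff)

lemma ip_self_nonneg: "0 \<le> ip f f"
  unfolding ip_def by (intro sum_nonneg) simp

lemma ip_indicator_left: "ip (indicator {x0}) g = g x0"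
proof -
  have "(\<lambda>x. indicator {x0} x * g x) = (\<lambda>x. if x = x0 then g x else 0)"
    by (auto simp: indicator_def)
  then show ?thesis unfolding ip_def by simp
qed

lemma ex1_ip_projection:
  fixes E :: "('a::finite \<Rightarrow> real) set"
  assumes E: "subspace ((vec_lambda :: ('a \<Rightarrow> real) \<Rightarrow> real^'a) ` E)"
  shows "\<exists>!g. g \<in> E \<and> (\<forall>h\<in>E. ip (\<lambda>x. v x - g x) h = 0)"
proof -
  let ?V = "(vec_lambda :: ('a \<Rightarrow> real) \<Rightarrow> real^'a) ` E"
  obtain y z where y: "y \<in> span ?V" and z: "\<And>w. w \<in> span ?V \<Longrightarrow> orthogonal z w"
    and yz: "vec_lambda v = y + z"
    using orthogonal_subspace_decomp_exists[of ?V "vec_lambda v"] by blast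
  have sp: "span ?V = ?V" using E by (simp add: span_eq_iff)
  from y obtain g where g: "g \<in> E" "y = vec_lambda g" unfolding sp by blast
  have orth: "\<forall>h\<in>E. ip (\<lambda>x. v x - g x) h = 0"
  proof
    fix h assume "h \<in> E"
    have "ip (\<lambda>x. v x - g x) h = inner (vec_lambda v - vec_lambda g) (vec_lambda h)"
      by (simp only: ip_eq_inner vec_lambda_diff)
    also have "vec_lambda v - vec_lambda g = z" using yz g(2) by simp
    also have "inner z (vec_lambda h) = 0" using z \<open>h \<in> E\<close> unfolding sp orthogonal_def by blast
    finally show "ip (\<lambda>x. v x - g x) h = 0" .
  qed
  show ?thesis
  proof (rule ex1I[of _ g])
    fix g' assume g': "g' \<in> E \<and> (\<forall>h\<in>E. ip (\<lambda>x. v x - g' x) h = 0)"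
    have "vec_lambda g - vec_lambda g' \<in> ?V" using E g g' by (simp add: subspace_diff)
    then obtain e where "e \<in> E" "vec_lambda g - vec_lambda g' = vec_lambda e" by blast
    moreover from this(2) have "e = (\<lambda>x. g x - g' x)" by (simp add: vec_eq_iff fun_eq_iff)
    ultimately have d: "(\<lambda>x. g x - g' x) \<in> E" by simp
    have "ip (\<lambda>x. g x - g' x) (\<lambda>x. g x - g' x)
        = ip (\<lambda>x. v x - g' x) (\<lambda>x. g x - g' x) - ip (\<lambda>x. v x - g x) (\<lambda>x. g x - g' x)"
      unfolding ip_diff_left[symmetric] by simp
    also have "\<dots> = 0" using g' orth d by simp
    finally show "g' = g" by (simp add: ip_self_eq_0_iff fun_eq_iff)
  qed (use g orth in blast)
qed

lemma subspace_eigenspace: "subspace ((vec_lambda :: ('a::finite \<Rightarrow> real) \<Rightarrow> real^'a) ` eigenspace adj lam)"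
  unfolding subspace_def
proof (intro conjI ballI allI)
  have "(\<lambda>_. 0) \<in> eigenspace adj lam" by (simp add: eigenspace_def laplacian_def)
  moreover have "(0 :: real^'a) = vec_lambda (\<lambda>_. 0)" by (simp add: vec_eq_iff)
  ultimately show "(0 :: real^'a) \<in> vec_lambda ` eigenspace adj lam" by blast
next
  fix u w :: "real^'a" assume "u \<in> vec_lambda ` eigenspace adj lam" "w \<in> vec_lambda ` eigenspace adj lam"
  then obtain f g where "f \<in> eigenspace adj lam" "g \<in> eigenspace adj lam" "u = vec_lambda f" "w = vec_lambda g"
    by blast
  then show "u + w \<in> vec_lambda ` eigenspace adj lam"
    by (intro image_eqI[where x = "\<lambda>x. f x + g x"])
      (simp_all add: vec_eq_iff eigenspace_def laplacian_add distrib_left)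
next
  fix c :: real and u :: "real^'a" assume "u \<in> vec_lambda ` eigenspace adj lam"
  then obtain f where "f \<in> eigenspace adj lam" "u = vec_lambda f" by blast
  then show "c *\<^sub>R u \<in> vec_lambda ` eigenspace adj lam"
    by (intro image_eqI[where x = "\<lambda>x. c * f x"])
      (simp_all add: vec_eq_iff eigenspace_def laplacian_scale mult.left_commute)
qed

lemma eig_proj_in_eigenspace: "eig_proj adj lam v \<in> eigenspace adj lam"
  and eig_proj_orthogonal: "h \<in> eigenspace adj lam \<Longrightarrow> ip (\<lambda>x. v x - eig_proj adj lam v x) h = 0"
  using theI'[OF ex1_ip_projection[OF subspace_eigenspace, of adj lam v]]
  unfolding eig_proj_def by blast+

lemma local_mult_eq: "local_mult adj x0 lam = eig_proj adj lam (indicator {x0}) x0"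
proof -
  have "(\<lambda>x. if x = x0 then 1 else 0) = (indicator {x0} :: 'a \<Rightarrow> real)"
    by (auto simp: indicator_def fun_eq_iff)
  then show ?thesis unfolding local_mult_def by simp
qed

lemma local_mult_nonneg: "0 \<le> local_mult adj x0 lam"
proof -
  let ?P = "eig_proj adj lam (indicator {x0})"
  have "local_mult adj x0 lam = ip (indicator {x0}) ?P"
    unfolding local_mult_eq ip_indicator_left ..
  also have "\<dots> = ip (\<lambda>x. indicator {x0} x - ?P x) ?P + ip ?P ?P"
    unfolding ip_diff_left by simp
  also have "ip (\<lambda>x. indicator {x0} x - ?P x) ?P = 0"
    by (rule eig_proj_orthogonal[OF eig_proj_in_eigenspace])
  finally show ?thesis using ip_self_nonneg[of ?P] by simp
qed

context finite_simple_graph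
begin

lemma ip_adjacency_commute: "ip f (adjacency adj g) = ip (adjacency adj f) g"
proof -
  have A: "adjacency adj h x = (\<Sum>y\<in>UNIV. if adj x y then h y else 0)" for h x
    unfolding adjacency_def by (simp add: sum.If_cases Int_def)
  have "ip f (adjacency adj g) = (\<Sum>x\<in>UNIV. \<Sum>y\<in>UNIV. if adj x y then f x * g y else 0)"
    unfolding ip_def A sum_distrib_left by (intro sum.cong refl) simp
  also have "\<dots> = (\<Sum>y\<in>UNIV. \<Sum>x\<in>UNIV. if adj x y then f x * g y else 0)"
    by (rule sum.swap)
  also have "\<dots> = (\<Sum>y\<in>UNIV. \<Sum>x\<in>UNIV. if adj y x then f x * g y else 0)"
    by (intro sum.cong refl) (metis adj_sym)
  also have "\<dots> = ip (adjacency adj f) g"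
    unfolding ip_def A sum_distrib_right by (intro sum.cong refl) simp
  finally show ?thesis .
qed

lemma ip_laplacian_commute: "ip f (laplacian adj g) = ip (laplacian adj f) g"
  using ip_adjacency_commute[of f g]
  unfolding laplacian_eq_adjacency ip_def by (simp add: algebra_simps sum_subtractf)

lemma eigenspace_orthogonal:
  assumes "f \<in> eigenspace adj lam" "g \<in> eigenspace adj mu" "lam \<noteq> mu"
  shows "ip f g = 0"
proof -
  have "mu * ip f g = ip f (laplacian adj g)"
    using assms(2) unfolding eigenspace_def ip_def by (simp add: sum_distrib_left algebra_simps)
  also have "\<dots> = ip (laplacian adj f) g" by (rule ip_laplacian_commute)
  also have "\<dots> = lam * ip f g"
    using assms(1) unfolding eigenspace_def ip_def by (simp add: sum_distrib_left algebra_simps)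
  finally show ?thesis using assms(3) by simp
qed

lemma finite_eigenvalues: "finite {lam. is_eigenvalue adj lam}"
proof -
  let ?\<Lambda> = "{lam. is_eigenvalue adj lam}"
  have "\<forall>lam\<in>?\<Lambda>. \<exists>f. f \<in> eigenspace adj lam \<and> f \<noteq> (\<lambda>_. 0)"
    unfolding is_eigenvalue_def by (auto simp only: Bex_def mem_Collect_eq)
  then obtain ev where "\<forall>lam\<in>?\<Lambda>. ev lam \<in> eigenspace adj lam \<and> ev lam \<noteq> (\<lambda>_. 0)"
    by (rule bchoice[THEN exE])
  then have ev: "\<And>lam. lam \<in> ?\<Lambda> \<Longrightarrow> ev lam \<in> eigenspace adj lam \<and> ev lam \<noteq> (\<lambda>_. 0)"
    by blast
  let ?g = "\<lambda>lam. vec_lambda (ev lam) :: real^'a"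
  have orth: "inner (?g lam) (?g mu) = 0" if "lam \<in> ?\<Lambda>" "mu \<in> ?\<Lambda>" "lam \<noteq> mu" for lam mu
    using eigenspace_orthogonal ev that unfolding ip_eq_inner[symmetric] by blast
  have nonzero: "inner (?g lam) (?g lam) \<noteq> 0" if "lam \<in> ?\<Lambda>" for lam
    using ev[OF that] unfolding ip_eq_inner[symmetric] ip_self_eq_0_iff by blast
  have "inj_on ?g ?\<Lambda>"
  proof (rule inj_onI)
    fix lam mu assume "lam \<in> ?\<Lambda>" "mu \<in> ?\<Lambda>" "?g lam = ?g mu"
    then show "lam = mu" using orth[of lam mu] nonzero[of lam] by auto
  qed
  moreover have "independent (?g ` ?\<Lambda>)"
  proof (rule pairwise_orthogonal_independent)
    show "pairwise orthogonal (?g ` ?\<Lambda>)"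
      unfolding pairwise_def orthogonal_def using orth by blast
    show "0 \<notin> ?g ` ?\<Lambda>" using nonzero by fastforce
  qed
  then have "finite (?g ` ?\<Lambda>)" using independent_bound by blast
  ultimately show ?thesis using finite_imageD by blast
qed

lemma orthogonal_eigenspaces_imp_zero:
  assumes orth: "\<And>lam h. h \<in> eigenspace adj lam \<Longrightarrow> ip r h = 0"
  shows "r = (\<lambda>_. 0)"
proof (rule ccontr)
  assume r: "r \<noteq> (\<lambda>_. 0)"
  define L where "L v = vec_lambda (laplacian adj (vec_nth v))" for v :: "real^'a"
  define W where "W = {w :: real^'a. \<forall>lam. \<forall>h\<in>eigenspace adj lam. inner w (vec_lambda h) = 0}"
  have "vec_nth (u + w) = (\<lambda>i. u $ i + w $ i)" "vec_nth (c *\<^sub>R u) = (\<lambda>i. c * u $ i)"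
    for u w :: "real^'a" and c by (simp_all add: fun_eq_iff)
  then have lin: "linear L"
    by (intro linearI) (simp_all add: L_def vec_eq_iff laplacian_add laplacian_scale)
  have sym: "inner (L x) y = inner x (L y)" for x y
    unfolding L_def inner_eq_ip by (simp add: vec_lambda_inverse ip_laplacian_commute[symmetric])
  have "subspace W" unfolding subspace_def W_def by (simp add: inner_add_left)
  moreover have "L w \<in> W" if "w \<in> W" for w
    unfolding W_def
  proof (intro CollectI allI ballI)
    fix lam h assume h: "h \<in> eigenspace adj lam"
    then have "L (vec_lambda h) = lam *\<^sub>R vec_lambda h"
      unfolding L_def eigenspace_def by (simp add: vec_eq_iff vec_lambda_inverse)
    then show "inner (L w) (vec_lambda h) = 0" using that h unfolding W_def by (simp add: sym)
  qed
  moreover have "vec_lambda r \<in> W" "vec_lambda r \<noteq> 0"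
    using orth r unfolding W_def by (auto simp: ip_eq_inner vec_eq_iff fun_eq_iff)
  ultimately obtain v c where v: "v \<in> W" "v \<noteq> 0" and "L v = c *\<^sub>R v"
    using self_adjoint_invariant_subspace_has_eigenvector[OF lin sym] by metis
  then have "vec_nth v \<in> eigenspace adj c"
    unfolding L_def eigenspace_def vec_eq_iff by simp
  then have "inner v (vec_lambda (vec_nth v)) = 0" using v(1) unfolding W_def by blast
  with v(2) show False by (simp add: vec_nth_inverse)
qed

lemma sum_eig_proj: "(\<Sum>lam\<in>{lam. is_eigenvalue adj lam}. eig_proj adj lam v x) = v x"
proof -
  let ?\<Lambda> = "{lam. is_eigenvalue adj lam}"
  define r where "r x = v x - (\<Sum>lam\<in>?\<Lambda>. eig_proj adj lam v x)" for x
  have "ip r h = 0" if h: "h \<in> eigenspace adj mu" for mu h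
  proof (cases "mu \<in> ?\<Lambda>")
    case True
    have "ip r h = ip v h - (\<Sum>lam\<in>?\<Lambda>. ip (eig_proj adj lam v) h)"
      unfolding r_def[abs_def] ip_diff_left ip_sum_left ..
    also have "(\<Sum>lam\<in>?\<Lambda>. ip (eig_proj adj lam v) h) = ip (eig_proj adj mu v) h"
    proof (rule sum.remove[OF finite_eigenvalues True, THEN trans])
      have "(\<Sum>lam\<in>?\<Lambda> - {mu}. ip (eig_proj adj lam v) h) = 0"
        using h by (intro sum.neutral ballI eigenspace_orthogonal[OF eig_proj_in_eigenspace]) auto
      then show "ip (eig_proj adj mu v) h + (\<Sum>lam\<in>?\<Lambda> - {mu}. ip (eig_proj adj lam v) h)
          = ip (eig_proj adj mu v) h" by simp
    qed
    also have "ip v h - ip (eig_proj adj mu v) h = 0"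
      using eig_proj_orthogonal[OF h, of v] unfolding ip_diff_left .
    finally show ?thesis .
  next
    case False
    then have "h = (\<lambda>_. 0)" using h unfolding is_eigenvalue_def by blast
    then show ?thesis unfolding ip_def by simp
  qed
  then have "r = (\<lambda>_. 0)" by (rule orthogonal_eigenspaces_imp_zero)
  then show ?thesis unfolding r_def by (simp add: fun_eq_iff)
qed

end

context regular_simple_graph
begin

lemma deg_eq: "deg adj x = q + 1"
  using regular unfolding regular_graph_def by blast

lemma eigenspace_iff_adjacency:
  "f \<in> eigenspace adj lam \<longleftrightarrow> (\<forall>x. adjacency adj f x = (real (q + 1) - lam) * f x)"
  unfolding eigenspace_def laplacian_eq_adjacency deg_eq by (auto simp: algebra_simps)

lemma adjacency_eig_proj:
  "adjacency adj (eig_proj adj lam v) x = (real (q + 1) - lam) * eig_proj adj lam v x"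
  using eig_proj_in_eigenspace[of adj lam v] unfolding eigenspace_iff_adjacency by blast

lemma eigenvalue_bound:
  assumes "is_eigenvalue adj lam"
  shows "\<bar>real (q + 1) - lam\<bar> \<le> real (q + 1)"
proof -
  obtain f where f: "f \<in> eigenspace adj lam" "f \<noteq> (\<lambda>_. 0)"
    using assms unfolding is_eigenvalue_def by (auto simp only: Bex_def)
  have "Max (range (\<lambda>y. \<bar>f y\<bar>)) \<in> range (\<lambda>y. \<bar>f y\<bar>)" by (rule Max_in) auto
  then obtain x where x: "Max (range (\<lambda>y. \<bar>f y\<bar>)) = \<bar>f x\<bar>" by (rule rangeE)
  have x: "\<bar>f y\<bar> \<le> \<bar>f x\<bar>" for y unfolding x[symmetric] by (rule Max_ge) auto
  have "0 < \<bar>f x\<bar>"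
  proof (rule ccontr)
    assume "\<not> 0 < \<bar>f x\<bar>"
    then have "f y = 0" for y using x[of y] by simp
    with f(2) show False by auto
  qed
  have "\<bar>real (q + 1) - lam\<bar> * \<bar>f x\<bar> = \<bar>adjacency adj f x\<bar>"
    using f(1) unfolding eigenspace_iff_adjacency by (simp add: abs_mult)
  also have "\<dots> \<le> (\<Sum>y\<in>{y. adj x y}. \<bar>f x\<bar>)"
    unfolding adjacency_def by (rule order_trans[OF sum_abs sum_mono]) (rule x)
  also have "\<dots> = real (q + 1) * \<bar>f x\<bar>" by (simp add: card_neighbours)
  finally show ?thesis using \<open>0 < \<bar>f x\<bar>\<close> by simp
qed

lemma dickson_adj_eq_sum_eig_proj:
  "real_of_int (dickson_adj x0 m y) = (\<Sum>lam\<in>{lam. is_eigenvalue adj lam}.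
     dickson (real q) m (real (q + 1) - lam) * eig_proj adj lam (indicator {x0}) y)"
proof (induction x0 m y rule: dickson_adj.induct)
  case (1 x0 y)
  show ?case
    using sum_eig_proj[of "indicator {x0}" y] by (simp add: sum_distrib_left[symmetric] of_int_indicator)
next
  case (2 x0 y)
  have "real_of_int (dickson_adj x0 (Suc 0) y) = adjacency adj (indicator {x0}) y"
    by (simp add: adjacency_def indicator_def)
  also have "\<dots> = adjacency adj (\<lambda>x. \<Sum>lam\<in>{lam. is_eigenvalue adj lam}. eig_proj adj lam (indicator {x0}) x) y"
    by (simp add: sum_eig_proj)
  finally show ?case unfolding adjacency_sum adjacency_eig_proj by simp
next
  case (3 x0 k y)
  let ?\<Lambda> = "{lam. is_eigenvalue adj lam}"
  let ?P = "\<lambda>lam. eig_proj adj lam (indicator {x0})" and ?a = "\<lambda>lam. real (q + 1) - lam"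
  have "adjacency adj (\<lambda>x. real_of_int (dickson_adj x0 (Suc k) x)) y
      = (\<Sum>lam\<in>?\<Lambda>. dickson (real q) (Suc k) (?a lam) * (?a lam * ?P lam y))"
    unfolding 3(1) adjacency_sum adjacency_scale adjacency_eig_proj ..
  moreover have "real q * real_of_int (dickson_adj x0 k y)
      = (\<Sum>lam\<in>?\<Lambda>. real q * (dickson (real q) k (?a lam) * ?P lam y))"
    unfolding 3(2) sum_distrib_left ..
  ultimately have "real_of_int (dickson_adj x0 (Suc (Suc k)) y)
      = (\<Sum>lam\<in>?\<Lambda>. dickson (real q) (Suc k) (?a lam) * (?a lam * ?P lam y)
          - real q * (dickson (real q) k (?a lam) * ?P lam y))"
    by (simp add: adjacency_of_int sum_subtractf)
  then show ?case by (simp add: algebra_simps)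
qed

lemma dickson_adj_at:
  "real_of_int (dickson_adj x0 m x0)
     = (\<Sum>lam\<in>local_spectrum adj x0. local_mult adj x0 lam * dickson (real q) m (real (q + 1) - lam))"
  unfolding dickson_adj_eq_sum_eig_proj
proof (rule sum.mono_neutral_cong_right[OF finite_eigenvalues])
  show "local_spectrum adj x0 \<subseteq> {lam. is_eigenvalue adj lam}"
    unfolding local_spectrum_def by auto
  show "\<forall>lam\<in>{lam. is_eigenvalue adj lam} - local_spectrum adj x0.
      dickson (real q) m (real (q + 1) - lam) * eig_proj adj lam (indicator {x0}) x0 = 0"
  proof
    fix lam assume "lam \<in> {lam. is_eigenvalue adj lam} - local_spectrum adj x0"
    then have "eig_proj adj lam (indicator {x0}) x0 = 0"
      using local_mult_nonneg[of adj x0 lam] unfolding local_spectrum_def local_mult_eq by auto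
    then show "dickson (real q) m (real (q + 1) - lam) * eig_proj adj lam (indicator {x0}) x0 = 0"
      by simp
  qed
qed (simp add: local_mult_eq)

lemma finite_local_spectrum: "finite (local_spectrum adj x0)"
  using finite_eigenvalues unfolding local_spectrum_def by (auto intro: finite_subset)

lemma local_spectrum_bound: "lam \<in> local_spectrum adj x0 \<Longrightarrow> \<bar>real (q + 1) - lam\<bar> \<le> real (q + 1)"
  using eigenvalue_bound unfolding local_spectrum_def by blast

theorem N_count_spectral:
  assumes "1 \<le> m"
  shows "real (N_count adj m x0) = (\<Sum>lam\<in>local_spectrum adj x0. local_mult adj x0 lam * dickson (real q) m (real (q + 1) - lam))
    + (if even m then real q - 1 else 0) + real_of_int (R_term adj m x0)"
  using arg_cong[OF N_count_eq_dickson_adj[OF assms, of x0], of real_of_int] dickson_adj_at[of x0 m]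
  by simp

end

section \<open>Logarithmic series\<close>

lemma sums_log1m:
  assumes "norm z < 1"
  shows "(\<lambda>n. z ^ Suc n / of_nat (Suc n)) sums (- log1m z)"
    and "log1m z = Ln (1 - z)"
proof -
  have "(\<lambda>n. - ((- (- z)) ^ n) / of_nat n) sums Ln (1 + - z)"
    using Ln_series'[of "- z"] assms by simp
  then have "(\<lambda>n. - (z ^ Suc n) / of_nat (Suc n)) sums Ln (1 - z)"
    by (subst sums_Suc_iff) simp
  from sums_minus[OF this] have *: "(\<lambda>n. z ^ Suc n / of_nat (Suc n)) sums (- Ln (1 - z))" by simp
  then show "log1m z = Ln (1 - z)" unfolding log1m_def by (simp add: sums_iff)
  with * show "(\<lambda>n. z ^ Suc n / of_nat (Suc n)) sums (- log1m z)" by simp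
qed

lemma alpha_gt_and_sq:
  fixes Q \<alpha> :: real
  assumes "0 < Q" and \<alpha>: "\<alpha> = (Q + sqrt (Q\<^sup>2 + 4 * Q)) / 2"
  shows "Q < \<alpha>" and "\<alpha> * \<alpha> = Q * \<alpha> + Q"
proof -
  define s where "s = sqrt (Q\<^sup>2 + 4 * Q)"
  have s2: "s * s = Q\<^sup>2 + 4 * Q" unfolding s_def using \<open>0 < Q\<close> by simp
  have "Q\<^sup>2 < Q\<^sup>2 + 4 * Q" using \<open>0 < Q\<close> by simp
  then have "Q < s" unfolding s_def using \<open>0 < Q\<close> by (simp add: real_less_rsqrt)
  then show "Q < \<alpha>" unfolding \<alpha> s_def[symmetric] by simp
  show "\<alpha> * \<alpha> = Q * \<alpha> + Q"
    unfolding \<alpha> s_def[symmetric] using s2 by (simp add: field_simps power2_eq_square)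
qed

lemma norm_root_less_alpha:
  fixes r :: complex and a c Q \<alpha> :: real
  assumes Q: "0 < Q" and \<alpha>: "\<alpha> = (Q + sqrt (Q\<^sup>2 + 4 * Q)) / 2"
    and a: "\<bar>a\<bar> \<le> Q" and c: "0 \<le> c" "c < Q"
    and root: "r\<^sup>2 - of_real a * r + of_real c = 0"
  shows "norm r < \<alpha>"
proof (rule ccontr)
  assume "\<not> norm r < \<alpha>"
  then have t: "\<alpha> \<le> norm r" by simp
  have "r\<^sup>2 = of_real a * r - of_real c" using root by (simp add: algebra_simps)
  then have "(norm r)\<^sup>2 = norm (of_real a * r - of_real c)" by (simp add: norm_power[symmetric])
  also have "\<dots> \<le> \<bar>a\<bar> * norm r + c"
    using norm_triangle_ineq4[of "of_real a * r" "of_real c"] c by (simp add: norm_mult)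
  also have "\<dots> < Q * norm r + Q"
    using a c by (simp add: add_le_less_mono mult_right_mono)
  finally have lt: "(norm r)\<^sup>2 - Q * norm r - Q < 0" by simp
  have "(norm r)\<^sup>2 - Q * norm r - Q = (norm r - \<alpha>) * (norm r + \<alpha> - Q) + (\<alpha> * \<alpha> - Q * \<alpha> - Q)"
    by (simp add: algebra_simps power2_eq_square)
  also have "\<alpha> * \<alpha> - Q * \<alpha> - Q = 0" using alpha_gt_and_sq[OF Q \<alpha>] by simp
  finally have "(norm r)\<^sup>2 - Q * norm r - Q = (norm r - \<alpha>) * (norm r + \<alpha> - Q)" by simp
  moreover have "0 \<le> (norm r - \<alpha>) * (norm r + \<alpha> - Q)"
    using t alpha_gt_and_sq(1)[OF Q \<alpha>] norm_ge_zero[of r] by (intro mult_nonneg_nonneg) linarith+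
  ultimately show False using lt by simp
qed

lemma log1m_mult:
  assumes "norm z < 1" "norm w < 1" "norm (z + w - z * w) < 1"
  shows "log1m (z + w - z * w) = log1m z + log1m w"
proof -
  have Re: "0 < Re (1 - v)" if "norm v < 1" for v :: complex
    using that abs_Re_le_cmod[of v] by simp
  have "1 - (z + w - z * w) = (1 - z) * (1 - w)" by (simp add: algebra_simps)
  moreover have "Ln ((1 - z) * (1 - w)) = Ln (1 - z) + Ln (1 - w)"
  proof (rule Ln_times_simple)
    have "\<bar>Im (Ln (1 - z))\<bar> < pi / 2" "\<bar>Im (Ln (1 - w))\<bar> < pi / 2"
      using Re assms Re_Ln_pos_lt_imp by blast+
    then show "- pi < Im (Ln (1 - z)) + Im (Ln (1 - w))" "Im (Ln (1 - z)) + Im (Ln (1 - w)) \<le> pi"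
      by linarith+
    show "1 - z \<noteq> 0" "1 - w \<noteq> 0" using Re[of z] Re[of w] assms by auto
  qed
  ultimately show ?thesis using assms by (simp add: sums_log1m(2))
qed

lemma complex_roots_of_sum_prod: "\<exists>r1 r2 :: complex. r1 + r2 = b \<and> r1 * r2 = c"
proof -
  define d where "d = csqrt (b\<^sup>2 - 4 * c)"
  have "(b + d) / 2 * ((b - d) / 2) = (b\<^sup>2 - d\<^sup>2) / 4" by (simp add: field_simps power2_eq_square)
  also have "d\<^sup>2 = b\<^sup>2 - 4 * c" unfolding d_def by (rule power2_csqrt)
  finally show ?thesis by (intro exI[of _ "(b + d) / 2"] exI[of _ "(b - d) / 2"]) (simp add: field_simps)
qed

lemma sums_dickson_log1m:
  fixes u :: complex and a \<alpha> :: real and q :: nat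
  assumes \<alpha>: "\<alpha> = (real (q + 1) + sqrt (real (q + 1) ^ 2 + 4 * real (q + 1))) / 2"
    and a: "\<bar>a\<bar> \<le> real (q + 1)" and u: "norm u < 1 / \<alpha>"
  shows "(\<lambda>n. of_real (dickson (real q) (Suc n) a) / of_nat (Suc n) * u ^ Suc n)
    sums (- log1m (of_real a * u - of_nat q * u\<^sup>2))"
proof -
  define Q where "Q = real (q + 1)"
  have Q: "0 < Q" and \<alpha>': "\<alpha> = (Q + sqrt (Q\<^sup>2 + 4 * Q)) / 2" unfolding Q_def \<alpha> by simp_all
  note \<alpha>Q = alpha_gt_and_sq[OF Q \<alpha>']
  have \<alpha>0: "0 < \<alpha>" using \<alpha>Q(1) Q by simp
  obtain r1 r2 :: complex where r: "r1 + r2 = of_real a" "r1 * r2 = of_nat q"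
    using complex_roots_of_sum_prod by blast
  have small: "norm (r * u) < 1" if "r = r1 \<or> r = r2" for r
  proof -
    have "r\<^sup>2 - (r1 + r2) * r + r1 * r2 = 0" using that by (auto simp: algebra_simps power2_eq_square)
    then have "norm r < \<alpha>"
      using a unfolding r by (intro norm_root_less_alpha[OF Q \<alpha>', of a "real q"]) (simp_all add: Q_def)
    then have "norm r * norm u < \<alpha> * (1 / \<alpha>)" using u by (intro mult_strict_mono') simp_all
    then show ?thesis using \<alpha>0 by (simp add: norm_mult)
  qed
  have "norm (of_real a * u - of_nat q * u\<^sup>2) \<le> \<bar>a\<bar> * norm u + real q * (norm u)\<^sup>2"
    using norm_triangle_ineq4[of "of_real a * u" "of_nat q * u\<^sup>2"] by (simp add: norm_mult norm_power)
  also have "\<dots> \<le> Q * norm u + Q * (norm u)\<^sup>2"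
    using a unfolding Q_def by (intro add_mono mult_right_mono) simp_all
  also have "\<dots> < Q * (1 / \<alpha>) + Q * (1 / \<alpha>)\<^sup>2"
  proof (rule add_less_le_mono)
    show "Q * norm u < Q * (1 / \<alpha>)" using Q u by (rule mult_strict_left_mono[rotated])
    show "Q * (norm u)\<^sup>2 \<le> Q * (1 / \<alpha>)\<^sup>2"
      using Q u by (intro mult_left_mono power_mono) simp_all
  qed
  also have "\<dots> = (Q * \<alpha> + Q) / (\<alpha> * \<alpha>)" using \<alpha>0 by (simp add: field_simps power2_eq_square)
  also have "\<dots> = 1" unfolding \<alpha>Q(2)[symmetric] using \<alpha>0 by simp
  finally have w: "norm (of_real a * u - of_nat q * u\<^sup>2) < 1" .
  have "of_real a * u - of_nat q * u\<^sup>2 = r1 * u + r2 * u - (r1 * u) * (r2 * u)"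
    unfolding r[symmetric] by (simp add: algebra_simps power2_eq_square)
  then have "- log1m (of_real a * u - of_nat q * u\<^sup>2) = - log1m (r1 * u) + - log1m (r2 * u)"
    using log1m_mult[of "r1 * u" "r2 * u"] small w by simp
  moreover have "(r1 * u) ^ Suc n / of_nat (Suc n) + (r2 * u) ^ Suc n / of_nat (Suc n)
      = of_real (dickson (real q) (Suc n) a) / of_nat (Suc n) * u ^ Suc n" for n
    using dickson_eq_power_sum[OF r, of "Suc n"]
    by (simp add: of_real_dickson power_mult_distrib add_divide_distrib algebra_simps)
  ultimately show ?thesis
    using sums_add[OF sums_log1m(1) sums_log1m(1), of "r1 * u" "r2 * u"] small by simp
qed

lemma sums_even_log1m:
  fixes u c :: complex
  assumes "norm u < 1"
  shows "(\<lambda>n. if even (Suc n) then c / of_nat (Suc n) * u ^ Suc n else 0) sums (- c / 2 * log1m (u\<^sup>2))"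
proof -
  define f where "f n = (if even (Suc n) then c / of_nat (Suc n) * u ^ Suc n else 0)" for n
  have u2: "norm (u\<^sup>2) < 1" using assms by (simp add: norm_power power_less_one_iff)
  have "f (2 * n + 1) = c / 2 * ((u\<^sup>2) ^ Suc n / of_nat (Suc n))" for n
  proof -
    have "u ^ (2 * Suc n) = (u\<^sup>2) ^ Suc n" by (simp only: power_mult)
    moreover have "(of_nat (2 * Suc n) :: complex) = 2 * of_nat (Suc n)" by simp
    ultimately show ?thesis unfolding f_def by (simp del: of_nat_Suc)
  qed
  with sums_mult[OF sums_log1m(1)[OF u2], of "c / 2"]
  have "(\<lambda>n. f (2 * n + 1)) sums (- c / 2 * log1m (u\<^sup>2))" by simp
  moreover have "(\<lambda>n. f (2 * n + 1)) sums (- c / 2 * log1m (u\<^sup>2)) \<longleftrightarrow> f sums (- c / 2 * log1m (u\<^sup>2))"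
  proof (rule sums_mono_reindex)
    show "strict_mono (\<lambda>n::nat. 2 * n + 1)" by (rule strict_monoI) simp
    show "f n = 0" if "n \<notin> range (\<lambda>n::nat. 2 * n + 1)" for n
      using that unfolding f_def by (metis oddE rangeI even_Suc)
  qed
  ultimately show ?thesis unfolding f_def by simp
qed

context finite_simple_graph
begin

lemma sums_R_series_shift:
  assumes "(\<lambda>n. of_int (R_term adj (Suc n) x) / of_nat (Suc n) * u ^ Suc n) sums s"
  shows "(\<lambda>m. of_int (R_term adj (m + 3) x) / of_nat (m + 3) * (u :: complex) ^ (m + 3)) sums s"
proof -
  let ?R = "\<lambda>n. of_int (R_term adj (Suc n) x) / of_nat (Suc n) * u ^ Suc n"
  have "(\<Sum>n<2. ?R n) = 0" by (simp add: numeral_2_eq_2 R_term_le_4)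
  with assms have "(\<lambda>n. ?R (n + 2)) sums s" by (subst sums_iff_shift) simp_all
  then show ?thesis by (simp add: eval_nat_numeral)
qed

end

context regular_simple_graph
begin

lemma summable_N_series:
  assumes "real (q + 1) * norm u < 1"
  shows "summable (\<lambda>n. of_nat (N_count adj (Suc n) x0) / of_nat (Suc n) * (u :: complex) ^ Suc n)"
proof (rule summable_comparison_test')
  let ?r = "real (q + 1) * norm u"
  show "summable (\<lambda>n. ?r * ?r ^ n)"
    using assms by (intro summable_mult summable_geometric) simp
  fix n
  have "norm (of_nat (N_count adj (Suc n) x0) / of_nat (Suc n) * u ^ Suc n)
      = real (N_count adj (Suc n) x0) / real (Suc n) * norm u ^ Suc n"
    by (simp add: norm_mult norm_divide norm_power del: of_nat_Suc)
  also have "\<dots> \<le> real (N_count adj (Suc n) x0) * norm u ^ Suc n"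
    by (intro mult_right_mono) (auto simp: divide_le_eq mult_le_cancel_left1)
  also have "\<dots> \<le> real (q + 1) ^ Suc n * norm u ^ Suc n"
  proof (rule mult_right_mono)
    show "real (N_count adj (Suc n) x0) \<le> real (q + 1) ^ Suc n"
      using N_count_le[of "Suc n" x0] by (metis of_nat_le_iff of_nat_power)
  qed simp
  also have "\<dots> = ?r * ?r ^ n" by (simp add: power_mult_distrib)
  finally show "norm (of_nat (N_count adj (Suc n) x0) / of_nat (Suc n) * u ^ Suc n) \<le> ?r * ?r ^ n" .
qed

lemma N_series_term_eq:
  "of_nat (N_count adj (Suc n) x0) / of_nat (Suc n) * u ^ Suc n
    = (if even (Suc n) then (of_nat q - 1) / of_nat (Suc n) * u ^ Suc n else 0)
      + (\<Sum>lam\<in>local_spectrum adj x0. of_real (local_mult adj x0 lam)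
          * (of_real (dickson (real q) (Suc n) (real (q + 1) - lam)) / of_nat (Suc n) * u ^ Suc n))
      + of_int (R_term adj (Suc n) x0) / of_nat (Suc n) * (u :: complex) ^ Suc n"
proof -
  have "(of_nat (N_count adj (Suc n) x0) :: complex) = of_real (real (N_count adj (Suc n) x0))" by simp
  also have "\<dots> = (\<Sum>lam\<in>local_spectrum adj x0. of_real (local_mult adj x0 lam)
          * of_real (dickson (real q) (Suc n) (real (q + 1) - lam)))
      + (if even (Suc n) then of_nat q - 1 else 0) + of_int (R_term adj (Suc n) x0)"
    unfolding N_count_spectral[of "Suc n" x0, simplified] by simp
  finally show ?thesis
    by (simp add: algebra_simps sum_distrib_left sum_distrib_right sum_divide_distrib add_divide_distrib)
qed

theorem N_series_sums:
  assumes \<alpha>: "\<alpha> = (real (q + 1) + sqrt (real (q + 1) ^ 2 + 4 * real (q + 1))) / 2"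
    and u: "norm u < 1 / \<alpha>"
  shows "(\<lambda>n. of_nat (N_count adj (Suc n) x0) / of_nat (Suc n) * u ^ Suc n) sums
    (- (of_nat q - 1) / 2 * log1m (u ^ 2)
     + (\<Sum>lam\<in>local_spectrum adj x0.
          - complex_of_real (local_mult adj x0 lam)
            * log1m (complex_of_real (real (q + 1) - lam) * u - of_nat q * u ^ 2))
     + (\<Sum>m. of_int (R_term adj (m + 3) x0) / of_nat (m + 3) * u ^ (m + 3)))"
    (is "?N sums (?sE + ?sL + ?sR)")
proof -
  have "real (q + 1) < \<alpha>" using alpha_gt_and_sq(1)[of "real (q + 1)" \<alpha>] \<alpha> by simp
  then have "real (q + 1) * norm u \<le> \<alpha> * norm u" by (intro mult_right_mono) simp_all
  also have "\<dots> < 1" using u \<open>real (q + 1) < \<alpha>\<close> by (simp add: field_simps)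
  finally have ru: "real (q + 1) * norm u < 1" .
  moreover have "norm u \<le> real (q + 1) * norm u" by (simp add: mult_le_cancel_right1)
  ultimately have "norm u < 1" by linarith
  let ?E = "\<lambda>n. if even (Suc n) then (of_nat q - 1) / of_nat (Suc n) * u ^ Suc n else 0"
  let ?L = "\<lambda>n. \<Sum>lam\<in>local_spectrum adj x0. of_real (local_mult adj x0 lam)
      * (of_real (dickson (real q) (Suc n) (real (q + 1) - lam)) / of_nat (Suc n) * u ^ Suc n)"
  have E: "?E sums ?sE" using \<open>norm u < 1\<close> by (rule sums_even_log1m)
  have L: "?L sums ?sL"
    using sums_sum[OF sums_mult[OF sums_dickson_log1m[OF \<alpha> local_spectrum_bound u]]] by simp
  have N: "?N sums suminf ?N" using summable_N_series[OF ru] by (rule summable_sums)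
  have "(\<lambda>n. of_int (R_term adj (Suc n) x0) / of_nat (Suc n) * u ^ Suc n) = (\<lambda>n. ?N n - ?E n - ?L n)"
    unfolding N_series_term_eq by simp
  then have "(\<lambda>n. of_int (R_term adj (Suc n) x0) / of_nat (Suc n) * u ^ Suc n) sums (suminf ?N - ?sE - ?sL)"
    using sums_diff[OF sums_diff[OF N E] L] by simp
  then have "?sR = suminf ?N - ?sE - ?sL" by (rule sums_R_series_shift[THEN sums_unique, symmetric])
  with N show ?thesis by simp
qed

end

theorem corollary4p6:
  fixes adj :: "'a::finite \<Rightarrow> 'a \<Rightarrow> bool" and q :: nat and x0 :: 'a and u :: complex
  assumes "simple_graph adj" and "connected_graph adj" and "regular_graph adj (q + 1)"
    and "q \<ge> 1"
    and "\<alpha> = (real (q + 1) + sqrt (real (q + 1) ^ 2 + 4 * real (q + 1))) / 2"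
    and "norm u < 1 / \<alpha>"
  shows "zeta_local adj u x0 =
    pow1m (u ^ 2) (- (of_nat q - 1) / 2)
    * (\<Prod>lam \<in> local_spectrum adj x0.
         pow1m (complex_of_real (real (q + 1) - lam) * u - of_nat q * u ^ 2)
               (- complex_of_real (local_mult adj x0 lam)))
    * exp (\<Sum>m. of_int (R_term adj (m + 3) x0) / of_nat (m + 3) * u ^ (m + 3))"
proof -
  interpret regular_simple_graph adj q
    using assms(1,3) by unfold_locales
  have "zeta_local adj u x0 = exp (\<Sum>n. of_nat (N_count adj (Suc n) x0) / of_nat (Suc n) * u ^ Suc n)"
    unfolding zeta_local_def ..
  also have "\<dots> = exp (- (of_nat q - 1) / 2 * log1m (u ^ 2)
     + (\<Sum>lam\<in>local_spectrum adj x0.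
          - complex_of_real (local_mult adj x0 lam)
            * log1m (complex_of_real (real (q + 1) - lam) * u - of_nat q * u ^ 2))
     + (\<Sum>m. of_int (R_term adj (m + 3) x0) / of_nat (m + 3) * u ^ (m + 3)))"
    using N_series_sums[OF assms(5,6)] by (simp add: sums_iff)
  finally show ?thesis
    unfolding pow1m_def exp_add exp_sum[OF finite_local_spectrum] .
qed

end
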